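(* In the setting of the context, $q_B=\tilde q=q|_B$ and $q_A=q|_A$, and $E_{M_1}(q(c))=q_A(E_{M_1}(c))$ for all $c\in C$.
   Context: $k$ is a field; $C_R(S)=\{r\in R:rs=sr\ \forall s\in S\}$. $N\subseteq M$ is a strongly separable, irreducible extension of $k$-algebras: $C_M(N)=k1$ and there are an $N$-bimodule map $E:M\to N$ and $x_1,\dots,x_n,y_1,\dots,y_n\in M$ with $\sum_iE(mx_i)y_i=m=\sum_ix_iE(y_im)$ for all $m\in M$, $E(1)\neq0$, $\sum_ix_iy_i\neq0$; normalized so that $E(1)=1$, whence $\sum_ix_iy_i=\lambda^{-1}1$ with $0\neq\lambda\in k$. Basic construction: given $S\subseteq R$, an $S$-bimodule map $E_S:R\to S$ with $E_S(1)=1$ and $r_i,s_i\in R$ with $\sum_iE_S(rr_i)s_i=r=\sum_ir_iE_S(s_ir)$ and $\sum_ir_is_i=\lambda^{-1}1$, set $R_1=R\otimes_SR$ with product $(a\otimes b)(c\otimes d)=aE_S(bc)\otimes d$, unit $\sum_ir_i\otimes s_i$, $R\subseteq R_1$ via $r\mapsto\sum_irr_i\otimes s_i$, $E_R:R_1\to R$, $a\otimes b\mapsto\lambda ab$; then $E_R$, $\lambda^{-1}r_i\otimes1$, $1\otimes s_i$ satisfy the same conditions with the same $\lambda$. From $(N\subseteq M,E)$ get $M_1,E_M$; from $(M\subseteq M_1,E_M)$ get $M_2,E_{M_1}$. Let $A=C_{M_1}(N)$, $B=C_{M_2}(M)$, $C=C_{M_2}(N)$. Depth 2 is assumed: $M_1$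 is free as right $M$-module with basis in $A$, $M_2$ free as right $M_1$-module with basis in $B$. Let $F=E_M\circ E_{M_1}$; on $C$ it takes values in $C_M(N)=k1\cong k$ and is a faithful linear functional on $C$; $E_M|_A$ is a faithful functional on $A$ and $E_{M_1}|_B$ a faithful functional on $B$ (values in $k1$). Nakayama automorphisms: $q:C\to C$ is defined by $F(q(c)c')=F(c'c)$ for all $c,c'\in C$; $q_A:A\to A$ by $E_M(q_A(a)a')=E_M(a'a)$ for all $a,a'\in A$; $q_B:B\to B$ by $E_{M_1}(q_B(b)b')=E_{M_1}(b'b)$ for all $b,b'\in B$; and $\tilde q:B\to B$ by $\hat F(\tilde q(b)x)=\hat F(xb)$ for all $b\in B$, $x\in M_2$, where $\hat F=E_M\circ E_{M_1}:M_2\to M$. Note $E_{M_1}(C)\subseteq A$. *)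

theory Defs
  imports "HOL-Library.Poly_Mapping" "HOL-Library.FuncSet"
begin

record ('k, 'a) kalg =
  carr :: "'a set"
  add  :: "'a \<Rightarrow> 'a \<Rightarrow> 'a"
  mul  :: "'a \<Rightarrow> 'a \<Rightarrow> 'a"
  zero :: "'a"
  one  :: "'a"
  smul :: "'k \<Rightarrow> 'a \<Rightarrow> 'a"

definition kalgebra :: "('k::field, 'a) kalg \<Rightarrow> bool" where
  "kalgebra A \<longleftrightarrow>
     zero A \<in> carr A \<and> one A \<in> carr A \<and>
     (\<forall>x\<in>carr A. \<forall>y\<in>carr A. add A x y \<in> carr A \<and> mul A x y \<in> carr A) \<and>
     (\<forall>c. \<forall>x\<in>carr A. smul A c x \<in> carr A) \<and>
     (\<forall>x\<in>carr A. \<forall>y\<in>carr A. \<forall>z\<in>carr A.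
        add A (add A x y) z = add A x (add A y z) \<and>
        mul A (mul A x y) z = mul A x (mul A y z) \<and>
        mul A x (add A y z) = add A (mul A x y) (mul A x z) \<and>
        mul A (add A x y) z = add A (mul A x z) (mul A y z)) \<and>
     (\<forall>x\<in>carr A. \<forall>y\<in>carr A. add A x y = add A y x) \<and>
     (\<forall>x\<in>carr A. add A x (zero A) = x \<and> add A x (smul A (-1) x) = zero A \<and>
        mul A (one A) x = x \<and> mul A x (one A) = x \<and> smul A 1 x = x) \<and>
     (\<forall>a b. \<forall>x\<in>carr A. smul A (a * b) x = smul A a (smul A b x) \<and>
        smul A (a + b) x = add A (smul A a x) (smul A b x)) \<and>
     (\<forall>a. \<forall>x\<in>carr A. \<forall>y\<in>carr A. smul A a (add A x y) = add A (smul A a x) (smul A a y) \<and>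
        smul A a (mul A x y) = mul A (smul A a x) y \<and>
        smul A a (mul A x y) = mul A x (smul A a y))"

definition subalgebra :: "('k::field, 'a) kalg \<Rightarrow> 'a set \<Rightarrow> bool" where
  "subalgebra A S \<longleftrightarrow> S \<subseteq> carr A \<and> one A \<in> S \<and> zero A \<in> S \<and>
     (\<forall>x\<in>S. \<forall>y\<in>S. add A x y \<in> S \<and> mul A x y \<in> S) \<and> (\<forall>c. \<forall>x\<in>S. smul A c x \<in> S)"

definition cent :: "('k, 'a) kalg \<Rightarrow> 'a set \<Rightarrow> 'a set" where
  "cent A S = {r \<in> carr A. \<forall>s\<in>S. mul A r s = mul A s r}"

definition scalars :: "('k, 'a) kalg \<Rightarrow> 'a set" where
  "scalars A = {smul A c (one A) | c. True}"

definition fsum :: "('k, 'a) kalg \<Rightarrow> ('b \<Rightarrow> 'a) \<Rightarrow> 'b set \<Rightarrow> 'a" where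
  "fsum A f I = Finite_Set.fold (\<lambda>i acc. add A (f i) acc) (zero A) I"

definition bimodule_map :: "('k, 'a) kalg \<Rightarrow> 'a set \<Rightarrow> ('a \<Rightarrow> 'a) \<Rightarrow> bool" where
  "bimodule_map A S E \<longleftrightarrow>
     (\<forall>m\<in>carr A. E m \<in> S) \<and>
     (\<forall>m\<in>carr A. \<forall>m'\<in>carr A. E (add A m m') = add A (E m) (E m')) \<and>
     (\<forall>s\<in>S. \<forall>m\<in>carr A. E (mul A s m) = mul A s (E m) \<and> E (mul A m s) = mul A (E m) s)"

type_synonym ('k, 'a) free2 = "('a \<times> 'a) \<Rightarrow>\<^sub>0 'k"

definition tscale :: "'k::field \<Rightarrow> ('k, 'a) free2 \<Rightarrow> ('k, 'a) free2" where
  "tscale c v = Poly_Mapping.map ((*) c) v"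

definition tgen :: "'a \<Rightarrow> 'a \<Rightarrow> ('k::field, 'a) free2" where
  "tgen a b = Poly_Mapping.single (a, b) 1"

definition tfree :: "('k::field, 'a) kalg \<Rightarrow> ('k, 'a) free2 set" where
  "tfree R = {v. Poly_Mapping.keys v \<subseteq> carr R \<times> carr R}"

text \<open>The k-subspace of relations defining R \<otimes>_S R.\<close>
inductive_set trel :: "('k::field, 'a) kalg \<Rightarrow> 'a set \<Rightarrow> ('k, 'a) free2 set"
  for R S where
  trel_zero: "0 \<in> trel R S"
| trel_add: "v \<in> trel R S \<Longrightarrow> w \<in> trel R S \<Longrightarrow> v + w \<in> trel R S"
| trel_scale: "v \<in> trel R S \<Longrightarrow> tscale c v \<in> trel R S"
| trel_addl: "a \<in> carr R \<Longrightarrow> a' \<in> carr R \<Longrightarrow> b \<in> carr R \<Longrightarrow>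
     tgen (add R a a') b - tgen a b - tgen a' b \<in> trel R S"
| trel_addr: "a \<in> carr R \<Longrightarrow> b \<in> carr R \<Longrightarrow> b' \<in> carr R \<Longrightarrow>
     tgen a (add R b b') - tgen a b - tgen a b' \<in> trel R S"
| trel_smull: "a \<in> carr R \<Longrightarrow> b \<in> carr R \<Longrightarrow>
     tgen (smul R c a) b - tscale c (tgen a b) \<in> trel R S"
| trel_smulr: "a \<in> carr R \<Longrightarrow> b \<in> carr R \<Longrightarrow>
     tgen a (smul R c b) - tscale c (tgen a b) \<in> trel R S"
| trel_bal: "a \<in> carr R \<Longrightarrow> b \<in> carr R \<Longrightarrow> s \<in> S \<Longrightarrow>
     tgen (mul R a s) b - tgen a (mul R s b) \<in> trel R S"

definition tclass :: "('k::field, 'a) kalg \<Rightarrow> 'a set \<Rightarrow> ('k, 'a) free2 \<Rightarrow> ('k, 'a) free2 set" where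
  "tclass R S v = {v + r | r. r \<in> trel R S}"

definition trep :: "('k, 'a) free2 set \<Rightarrow> ('k, 'a) free2" where
  "trep X = (SOME v. v \<in> X)"

definition tmul_raw :: "('k::field, 'a) kalg \<Rightarrow> ('a \<Rightarrow> 'a) \<Rightarrow> ('k, 'a) free2 \<Rightarrow> ('k, 'a) free2 \<Rightarrow> ('k, 'a) free2" where
  "tmul_raw R E v w =
     (\<Sum>p\<in>Poly_Mapping.keys v. \<Sum>p'\<in>Poly_Mapping.keys w.
        tscale (Poly_Mapping.lookup v p * Poly_Mapping.lookup w p')
          (tgen (mul R (fst p) (E (mul R (snd p) (fst p')))) (snd p')))"

definition bc_alg :: "('k::field, 'a) kalg \<Rightarrow> 'a set \<Rightarrow> ('a \<Rightarrow> 'a) \<Rightarrow> nat \<Rightarrow>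
    (nat \<Rightarrow> 'a) \<Rightarrow> (nat \<Rightarrow> 'a) \<Rightarrow> ('k, ('k, 'a) free2 set) kalg" where
  "bc_alg R S E n r s =
     \<lparr> carr = tclass R S ` tfree R,
       add = (\<lambda>X Y. tclass R S (trep X + trep Y)),
       mul = (\<lambda>X Y. tclass R S (tmul_raw R E (trep X) (trep Y))),
       zero = tclass R S 0,
       one = tclass R S (\<Sum>i<n. tgen (r i) (s i)),
       smul = (\<lambda>c X. tclass R S (tscale c (trep X))) \<rparr>"

definition bc_emb :: "('k::field, 'a) kalg \<Rightarrow> 'a set \<Rightarrow> nat \<Rightarrow>
    (nat \<Rightarrow> 'a) \<Rightarrow> (nat \<Rightarrow> 'a) \<Rightarrow> 'a \<Rightarrow> ('k, 'a) free2 set" where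
  "bc_emb R S n r s x = tclass R S (\<Sum>i<n. tgen (mul R x (r i)) (s i))"

definition bc_E :: "('k::field, 'a) kalg \<Rightarrow> 'k \<Rightarrow> ('k, 'a) free2 set \<Rightarrow> 'a" where
  "bc_E R lam X = smul R lam
      (fsum R (\<lambda>p. smul R (Poly_Mapping.lookup (trep X) p) (mul R (fst p) (snd p)))
              (Poly_Mapping.keys (trep X)))"

text \<open>New dual bases in R_1: lambda^{-1} r_i \<otimes> 1 and 1 \<otimes> s_i.\<close>
definition bc_r :: "('k::field, 'a) kalg \<Rightarrow> 'a set \<Rightarrow> 'k \<Rightarrow> (nat \<Rightarrow> 'a) \<Rightarrow> nat \<Rightarrow> ('k, 'a) free2 set" where
  "bc_r R S lam r i = tclass R S (tscale (inverse lam) (tgen (r i) (one R)))"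

definition bc_s :: "('k::field, 'a) kalg \<Rightarrow> 'a set \<Rightarrow> (nat \<Rightarrow> 'a) \<Rightarrow> nat \<Rightarrow> ('k, 'a) free2 set" where
  "bc_s R S s i = tclass R S (tgen (one R) (s i))"

definition ss_irreducible ::
  "('k::field, 'a) kalg \<Rightarrow> 'a set \<Rightarrow> ('a \<Rightarrow> 'a) \<Rightarrow> nat \<Rightarrow> (nat \<Rightarrow> 'a) \<Rightarrow> (nat \<Rightarrow> 'a) \<Rightarrow> 'k \<Rightarrow> bool" where
  "ss_irreducible M N E n x y lam \<longleftrightarrow>
     kalgebra M \<and> subalgebra M N \<and> one M \<noteq> zero M \<and>
     cent M N = scalars M \<and>
     bimodule_map M N E \<and> E (one M) = one M \<and>
     (\<forall>i<n. x i \<in> carr M \<and> y i \<in> carr M) \<and>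
     (\<forall>m\<in>carr M. fsum M (\<lambda>i. mul M (E (mul M m (x i))) (y i)) {..<n} = m) \<and>
     (\<forall>m\<in>carr M. fsum M (\<lambda>i. mul M (x i) (E (mul M (y i) m))) {..<n} = m) \<and>
     lam \<noteq> 0 \<and>
     fsum M (\<lambda>i. mul M (x i) (y i)) {..<n} = smul M (inverse lam) (one M)"

definition free_right_basis_in ::
  "('k, 'b) kalg \<Rightarrow> ('k, 'a) kalg \<Rightarrow> ('a \<Rightarrow> 'b) \<Rightarrow> 'b set \<Rightarrow> bool" where
  "free_right_basis_in Z R emb P \<longleftrightarrow>
     (\<exists>(m::nat) a. (\<forall>j<m. a j \<in> P) \<and>
        (\<forall>z\<in>carr Z. \<exists>!c. c \<in> {..<m} \<rightarrow>\<^sub>E carr R \<and>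
            z = fsum Z (\<lambda>j. mul Z (a j) (emb (c j))) {..<m}))"

definition faithful_on :: "('k, 'b) kalg \<Rightarrow> 'b set \<Rightarrow> ('k, 'c) kalg \<Rightarrow> ('b \<Rightarrow> 'c) \<Rightarrow> bool" where
  "faithful_on Z D W phi \<longleftrightarrow>
     (\<forall>d\<in>D. (\<forall>d'\<in>D. phi (mul Z d d') = zero W) \<longrightarrow> d = zero Z) \<and>
     (\<forall>d\<in>D. (\<forall>d'\<in>D. phi (mul Z d' d) = zero W) \<longrightarrow> d = zero Z)"


definition M1_of where "M1_of M N E n x y = bc_alg M N E n x y"
definition i1_of where "i1_of M N n x y = bc_emb M N n x y"
definition EM_of where "EM_of M lam = bc_E M lam"
definition M2_of where
  "M2_of M N E n x y lam =
     bc_alg (M1_of M N E n x y) (i1_of M N n x y ` carr M) (i1_of M N n x y \<circ> EM_of M lam)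
            n (bc_r M N lam x) (bc_s M N y)"
definition i2_of where
  "i2_of M N E n x y lam =
     bc_emb (M1_of M N E n x y) (i1_of M N n x y ` carr M) n (bc_r M N lam x) (bc_s M N y)"
definition EM1_of where "EM1_of M N E n x y lam = bc_E (M1_of M N E n x y) lam"

end

theory Submission
  imports Defs
begin

text \<open>
  Each identity compares two elements of a centralizer (A, B or C) on which a faithful functional
  is nondegenerate, so it suffices that both elements pair identically with that centralizer.
  The pairings are matched by the bimodule property of \<open>E\<^sub>M\<^sub>1\<close> with respect to
  \<open>M\<^sub>1\<close> (which also gives \<open>M\<^sub>1 \<subseteq> M\<^sub>2\<close> sending A into C and
  \<open>E\<^sub>M\<^sub>1\<close> sending C into A) together with the twisted trace identities defining
  the four maps. For \<open>qB = qt\<close> one uses in addition that \<open>E\<^sub>M\<^sub>1\<close> maps B into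
  \<open>C\<^sub>M\<^sub>1(M) = k1\<close>, where \<open>E\<^sub>M\<close> is injective; this irreducibility of
  \<open>M \<subseteq> M\<^sub>1\<close> is inherited from \<open>N \<subseteq> M\<close>.

  To iterate the construction one needs \<open>M \<subseteq> M\<^sub>1\<close> to be strongly separable again,
  with dual bases \<open>\<lambda>\<^sup>-\<^sup>1 x\<^sub>i \<otimes> 1\<close> and \<open>1 \<otimes> y\<^sub>i\<close>; this is verified on
  \<open>M \<otimes>\<^sub>N M\<close> realised as the quotient of the free vector space on \<open>M \<times> M\<close> by the
  bilinearity and balancing relations.
\<close>

section \<open>Algebras over a field\<close>

locale k_algebra =
  fixes A :: "('k::field, 'a) kalg"
  assumes kalgebra: "kalgebra A"
begin

lemma closed[simp, intro]:
  "zero A \<in> carr A" "one A \<in> carr A"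
  "x \<in> carr A \<Longrightarrow> y \<in> carr A \<Longrightarrow> add A x y \<in> carr A"
  "x \<in> carr A \<Longrightarrow> y \<in> carr A \<Longrightarrow> mul A x y \<in> carr A"
  "x \<in> carr A \<Longrightarrow> smul A c x \<in> carr A"
  using kalgebra unfolding kalgebra_def by auto

context
  fixes x y z assumes xyz: "x \<in> carr A" "y \<in> carr A" "z \<in> carr A"
begin

lemma add_assoc: "add A (add A x y) z = add A x (add A y z)"
  using kalgebra xyz unfolding kalgebra_def by blast
lemma mul_assoc: "mul A (mul A x y) z = mul A x (mul A y z)"
  using kalgebra xyz unfolding kalgebra_def by blast
lemma distl: "mul A x (add A y z) = add A (mul A x y) (mul A x z)"
  using kalgebra xyz unfolding kalgebra_def by blast
lemma distr: "mul A (add A x y) z = add A (mul A x z) (mul A y z)"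
  using kalgebra xyz unfolding kalgebra_def by blast

end

context
  fixes x y assumes xy: "x \<in> carr A" "y \<in> carr A"
begin

lemma add_comm: "add A x y = add A y x"
  using kalgebra xy unfolding kalgebra_def by blast
lemma smul_add: "smul A a (add A x y) = add A (smul A a x) (smul A a y)"
  using kalgebra xy unfolding kalgebra_def by blast
lemma smul_mul_left: "mul A (smul A a x) y = smul A a (mul A x y)"
  using kalgebra xy unfolding kalgebra_def by metis
lemma smul_mul_right: "mul A x (smul A a y) = smul A a (mul A x y)"
  using kalgebra xy unfolding kalgebra_def by metis

end

context
  fixes x assumes x: "x \<in> carr A"
begin

lemma add_zero: "add A x (zero A) = x"
  using kalgebra x unfolding kalgebra_def by blast
lemma add_neg: "add A x (smul A (-1) x) = zero A"
  using kalgebra x unfolding kalgebra_def by blast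
lemma one_mul: "mul A (one A) x = x"
  using kalgebra x unfolding kalgebra_def by blast
lemma mul_one: "mul A x (one A) = x"
  using kalgebra x unfolding kalgebra_def by blast
lemma smul_one: "smul A 1 x = x"
  using kalgebra x unfolding kalgebra_def by blast
lemma smul_smul: "smul A a (smul A b x) = smul A (a * b) x"
  using kalgebra x unfolding kalgebra_def by metis
lemma smul_add_scalar: "smul A (a + b) x = add A (smul A a x) (smul A b x)"
  using kalgebra x unfolding kalgebra_def by blast

end

lemmas [simp] = add_zero one_mul mul_one smul_one smul_smul smul_mul_left smul_mul_right

lemma zero_add[simp]: "x \<in> carr A \<Longrightarrow> add A (zero A) x = x"
  using add_comm[of "zero A" x] add_zero by simp

lemma add_left_comm: "x \<in> carr A \<Longrightarrow> y \<in> carr A \<Longrightarrow> z \<in> carr A \<Longrightarrow> add A x (add A y z) = add A y (add A x z)"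
  using add_assoc[of x y z] add_assoc[of y x z] add_comm[of x y] by simp

lemma add_cancel_left:
  assumes "x \<in> carr A" "y \<in> carr A" "z \<in> carr A" "add A x y = add A x z" shows "y = z"
proof -
  have n: "add A (smul A (-1) x) x = zero A" using add_neg[of x] add_comm[of "smul A (-1) x" x] assms by simp
  have "y = add A (add A (smul A (-1) x) x) y" using n assms by simp
  also have "\<dots> = add A (smul A (-1) x) (add A x y)" using assms add_assoc by simp
  also have "\<dots> = add A (smul A (-1) x) (add A x z)" using assms by simp
  also have "\<dots> = add A (add A (smul A (-1) x) x) z" using assms add_assoc by simp
  also have "\<dots> = z" using n assms by simp
  finally show ?thesis .
qed

lemma smul_zero_scalar[simp]: "x \<in> carr A \<Longrightarrow> smul A 0 x = zero A"
proof -
  assume x: "x \<in> carr A"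
  have "add A (smul A 0 x) (smul A 0 x) = add A (smul A 0 x) (zero A)"
    using smul_add_scalar[OF x, of 0 0] x by simp
  then show ?thesis using add_cancel_left x by blast
qed

lemma smul_zero[simp]: "smul A c (zero A) = zero A"
proof -
  have "smul A c (zero A) = smul A c (smul A 0 (one A))" by simp
  also have "\<dots> = smul A 0 (one A)" by (simp del: smul_zero_scalar)
  finally show ?thesis by simp
qed

lemma mul_zero[simp]: "x \<in> carr A \<Longrightarrow> mul A x (zero A) = zero A"
proof -
  assume x: "x \<in> carr A"
  have "mul A x (zero A) = mul A x (smul A 0 (one A))" by simp
  also have "\<dots> = zero A" using x by (simp del: smul_zero_scalar) simp
  finally show ?thesis .
qed

lemma zero_mul[simp]: "x \<in> carr A \<Longrightarrow> mul A (zero A) x = zero A"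
proof -
  assume x: "x \<in> carr A"
  have "mul A (zero A) x = mul A (smul A 0 (one A)) x" by simp
  also have "\<dots> = zero A" using x by (simp del: smul_zero_scalar) simp
  finally show ?thesis .
qed

definition sub where "sub x y = add A x (smul A (-1) y)"

lemma sub_closed[simp,intro]: "x \<in> carr A \<Longrightarrow> y \<in> carr A \<Longrightarrow> sub x y \<in> carr A"
  unfolding sub_def by simp

lemma sub_self[simp]: "x \<in> carr A \<Longrightarrow> sub x x = zero A"
  unfolding sub_def using add_neg by simp

lemma neg_add: "y \<in> carr A \<Longrightarrow> add A (smul A (-1) y) y = zero A"
  using add_neg[of y] add_comm[of "smul A (-1) y" y] by simp

lemma sub_eq_zero: "x \<in> carr A \<Longrightarrow> y \<in> carr A \<Longrightarrow> sub x y = zero A \<Longrightarrow> x = y"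
  unfolding sub_def
proof -
  assume a: "x \<in> carr A" "y \<in> carr A" "add A x (smul A (-1) y) = zero A"
  have "x = add A x (add A (smul A (-1) y) y)" using a neg_add by simp
  also have "\<dots> = add A (add A x (smul A (-1) y)) y" by (rule add_assoc[symmetric]) (use a in auto)
  also have "\<dots> = y" using a by simp
  finally show "x = y" .
qed

lemma mul_sub_left: "x \<in> carr A \<Longrightarrow> y \<in> carr A \<Longrightarrow> z \<in> carr A \<Longrightarrow> mul A (sub x y) z = sub (mul A x z) (mul A y z)"
  unfolding sub_def by (simp add: distr)

lemma mul_sub_right: "x \<in> carr A \<Longrightarrow> y \<in> carr A \<Longrightarrow> z \<in> carr A \<Longrightarrow> mul A z (sub x y) = sub (mul A z x) (mul A z y)"
  unfolding sub_def by (simp add: distl)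

lemma sub_sub_add_self: "y \<in> carr A \<Longrightarrow> z \<in> carr A \<Longrightarrow> sub (sub (add A y z) y) z = zero A"
proof -
  assume yz: "y \<in> carr A" "z \<in> carr A"
  have "sub (add A y z) y = add A (add A y z) (smul A (-1) y)" unfolding sub_def ..
  also have "\<dots> = add A z (add A y (smul A (-1) y))" using yz
    by (simp add: add_assoc add_left_comm)
  also have "\<dots> = z" using yz add_neg by simp
  finally show ?thesis using yz by simp
qed

lemma smul_one_inject:
  assumes "one A \<noteq> zero A" "smul A a (one A) = smul A b (one A)" shows "a = b"
proof (rule ccontr)
  assume ab: "a \<noteq> b"
  have "smul A (a + (- b)) (one A) = add A (smul A a (one A)) (smul A (-b) (one A))"
    by (rule smul_add_scalar) simp
  also have "smul A (-b) (one A) = smul A (-1) (smul A b (one A))" by simp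
  also have "add A (smul A a (one A)) (smul A (-1) (smul A b (one A))) = zero A"
    using assms(2) add_neg[of "smul A b (one A)"] by simp
  finally have z: "smul A (a - b) (one A) = zero A" by simp
  have "one A = smul A (inverse (a - b)) (smul A (a - b) (one A))"
    using ab by simp
  also have "\<dots> = zero A" using z by (simp del: smul_smul)
  finally show False using assms(1) by simp
qed

text \<open>\<^const>\<open>fsum\<close> folds \<^term>\<open>add A\<close>, which commutes only on the carrier; the guarded step
  below agrees with it there and commutes everywhere, as \<^const>\<open>Finite_Set.fold\<close> requires.\<close>

definition fsum_step where "fsum_step f i acc = (if acc \<in> carr A \<and> f i \<in> carr A then add A (f i) acc else acc)"

lemma fsum_step_commute: "fsum_step f j (fsum_step f i acc) = fsum_step f i (fsum_step f j acc)"
  unfolding fsum_step_def by (auto simp: add_left_comm)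

lemma comp_fun_commute_fsum_step: "comp_fun_commute_on UNIV (fsum_step f)"
  unfolding comp_fun_commute_on_def by (simp add: fun_eq_iff fsum_step_commute)

lemma fold_fsum_step_insert: "finite I \<Longrightarrow> i \<notin> I \<Longrightarrow>
   Finite_Set.fold (fsum_step f) z (insert i I) = fsum_step f i (Finite_Set.fold (fsum_step f) z I)"
  by (rule comp_fun_commute_on.fold_insert[OF comp_fun_commute_fsum_step]) simp_all

lemma fsum_eq_fold_step: assumes "\<forall>i\<in>I. f i \<in> carr A" shows "fsum A f I = Finite_Set.fold (fsum_step f) (zero A) I"
  unfolding fsum_def
  by (rule fold_closed_eq[where B="carr A"]) (simp_all add: fsum_step_def assms)

lemma fold_fsum_step_closed: "finite I \<Longrightarrow> Finite_Set.fold (fsum_step f) (zero A) I \<in> carr A"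
proof (induction I rule: finite_induct)
  case empty then show ?case by simp
next
  case (insert x F)
  have "Finite_Set.fold (fsum_step f) (zero A) (insert x F) = fsum_step f x (Finite_Set.fold (fsum_step f) (zero A) F)"
    using fold_fsum_step_insert[of F x f "zero A"] insert by simp
  then show ?case using insert.IH unfolding fsum_step_def by simp
qed

lemma fsum_empty[simp]: "fsum A f {} = zero A"
  unfolding fsum_def by simp

lemma fsum_closed[simp, intro]:
  assumes "\<forall>i\<in>I. f i \<in> carr A" shows "fsum A f I \<in> carr A"
proof (cases "finite I")
  case True
  have "fsum A f I = Finite_Set.fold (fsum_step f) (zero A) I" using assms by (rule fsum_eq_fold_step)
  then show ?thesis using fold_fsum_step_closed[OF True, of f] by simp
next
  case False
  then show ?thesis unfolding fsum_def by simp
qed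

lemma fsum_insert:
  assumes "finite I" "i \<notin> I" "f i \<in> carr A" "\<forall>j\<in>I. f j \<in> carr A"
  shows "fsum A f (insert i I) = add A (f i) (fsum A f I)"
proof -
  have "fsum A f (insert i I) = Finite_Set.fold (fsum_step f) (zero A) (insert i I)"
    using assms by (intro fsum_eq_fold_step) auto
  also have "\<dots> = fsum_step f i (Finite_Set.fold (fsum_step f) (zero A) I)"
    by (rule fold_fsum_step_insert[OF assms(1,2)])
  also have "Finite_Set.fold (fsum_step f) (zero A) I = fsum A f I"
    using fsum_eq_fold_step[of I f] assms(4) by simp
  also have "fsum_step f i (fsum A f I) = add A (f i) (fsum A f I)"
    unfolding fsum_step_def using assms fsum_closed[of I f] by simp
  finally show ?thesis .
qed

lemma fsum_infinite[simp]: "infinite I \<Longrightarrow> fsum A f I = zero A"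
  unfolding fsum_def by simp

lemma fsum_cong:
  assumes "\<And>i. i \<in> I \<Longrightarrow> f i = g i" shows "fsum A f I = fsum A g I"
  unfolding fsum_def
  by (rule fold_closed_eq[where B=UNIV]) (simp_all add: assms)

lemma fsum_add:
  assumes "\<forall>i\<in>I. f i \<in> carr A" "\<forall>i\<in>I. g i \<in> carr A"
  shows "fsum A (\<lambda>i. add A (f i) (g i)) I = add A (fsum A f I) (fsum A g I)"
  using assms
proof (induction I rule: infinite_finite_induct)
  case (insert x F)
  have *: "fsum A (\<lambda>i. add A (f i) (g i)) (insert x F) = add A (add A (f x) (g x)) (fsum A (\<lambda>i. add A (f i) (g i)) F)"
    using insert by (intro fsum_insert) auto
  show ?case unfolding * using insert
    by (simp add: fsum_insert add_assoc add_left_comm)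
qed auto

lemma fsum_smul:
  assumes "\<forall>i\<in>I. f i \<in> carr A"
  shows "fsum A (\<lambda>i. smul A c (f i)) I = smul A c (fsum A f I)"
  using assms
proof (induction I rule: infinite_finite_induct)
  case (insert x F)
  then show ?case by (simp add: fsum_insert smul_add)
qed auto

lemma fsum_mul_left:
  assumes "\<forall>i\<in>I. f i \<in> carr A" "a \<in> carr A"
  shows "fsum A (\<lambda>i. mul A a (f i)) I = mul A a (fsum A f I)"
  using assms
proof (induction I rule: infinite_finite_induct)
  case (insert x F)
  then show ?case by (simp add: fsum_insert distl)
qed auto

lemma fsum_mul_right:
  assumes "\<forall>i\<in>I. f i \<in> carr A" "a \<in> carr A"
  shows "fsum A (\<lambda>i. mul A (f i) a) I = mul A (fsum A f I) a"
  using assms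
proof (induction I rule: infinite_finite_induct)
  case (insert x F)
  then show ?case by (simp add: fsum_insert distr)
qed auto

lemma fsum_zero_terms:
  assumes "\<forall>i\<in>I. f i = zero A"
  shows "fsum A f I = zero A"
  using assms
proof (induction I rule: infinite_finite_induct)
  case (insert x F)
  then show ?case by (simp add: fsum_insert)
qed auto

lemma fsum_mono_neutral:
  assumes "finite J" "I \<subseteq> J" "\<forall>i\<in>J. f i \<in> carr A" "\<forall>i\<in>J - I. f i = zero A"
  shows "fsum A f J = fsum A f I"
proof -
  have "finite (J - I)" using assms by auto
  have "\<And>K. K \<subseteq> J - I \<Longrightarrow> fsum A f (I \<union> K) = fsum A f I"
  proof -
    fix K assume "K \<subseteq> J - I"
    then have "finite K" using \<open>finite (J - I)\<close> finite_subset by blast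
    then show "fsum A f (I \<union> K) = fsum A f I" using \<open>K \<subseteq> J - I\<close>
    proof (induction K rule: finite_induct)
      case (insert x F)
      have "finite I" using assms finite_subset by blast
      then have "fsum A f (insert x (I \<union> F)) = add A (f x) (fsum A f (I \<union> F))"
        using insert assms by (intro fsum_insert) auto
      moreover have "fsum A f I \<in> carr A" using assms by (intro fsum_closed) auto
      ultimately show ?case using insert assms by auto
    qed simp
  qed
  from this[of "J - I"] assms show ?thesis by (simp add: Un_absorb1 Un_Diff_cancel)
qed

lemma fsum_single[simp]: "f i \<in> carr A \<Longrightarrow> fsum A f {i} = f i"
  using fsum_insert[of "{}" i f] by simp

lemma cent_carr: "x \<in> cent A T \<Longrightarrow> x \<in> carr A" unfolding cent_def by blast

lemma cent_comm: "x \<in> cent A T \<Longrightarrow> t \<in> T \<Longrightarrow> mul A x t = mul A t x" unfolding cent_def by blast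

lemma cent_sub:
  assumes "T \<subseteq> carr A" "x \<in> cent A T" "y \<in> cent A T" shows "sub x y \<in> cent A T"
  unfolding cent_def
proof (intro CollectI conjI ballI)
  have xy: "x \<in> carr A" "y \<in> carr A" using assms cent_carr by blast+
  then show "sub x y \<in> carr A" by simp
  fix t assume t: "t \<in> T"
  then have tc: "t \<in> carr A" using assms(1) by blast
  have "mul A (sub x y) t = sub (mul A x t) (mul A y t)" using xy tc by (rule mul_sub_left)
  also have "\<dots> = sub (mul A t x) (mul A t y)" using assms(2,3) t cent_comm by metis
  also have "\<dots> = mul A t (sub x y)" using xy tc by (rule mul_sub_right[symmetric])
  finally show "mul A (sub x y) t = mul A t (sub x y)" .
qed

lemma cent_mul:
  assumes "T \<subseteq> carr A" "x \<in> cent A T" "y \<in> cent A T" shows "mul A x y \<in> cent A T"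
  unfolding cent_def
proof (intro CollectI conjI ballI)
  have xy: "x \<in> carr A" "y \<in> carr A" using assms cent_carr by blast+
  then show "mul A x y \<in> carr A" by simp
  fix t assume t: "t \<in> T"
  then have tc: "t \<in> carr A" using assms(1) by blast
  have "mul A (mul A x y) t = mul A x (mul A y t)" using xy tc by (rule mul_assoc)
  also have "\<dots> = mul A x (mul A t y)" using assms(3) t cent_comm by metis
  also have "\<dots> = mul A (mul A x t) y" using xy tc by (simp add: mul_assoc)
  also have "\<dots> = mul A (mul A t x) y" using assms(2) t cent_comm by metis
  also have "\<dots> = mul A t (mul A x y)" using xy tc by (simp add: mul_assoc)
  finally show "mul A (mul A x y) t = mul A t (mul A x y)" .
qed

lemma cent_antimono: "T' \<subseteq> T \<Longrightarrow> cent A T \<subseteq> cent A T'"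
  unfolding cent_def by blast

lemma cent_faithful_eqI:
  assumes W: "k_algebra W" and faithful: "faithful_on A (cent A T) W phi" and T: "T \<subseteq> carr A"
    and phi_carr: "\<And>X. X \<in> carr A \<Longrightarrow> phi X \<in> carr W"
    and phi_add: "\<And>X Y. X \<in> carr A \<Longrightarrow> Y \<in> carr A \<Longrightarrow> phi (add A X Y) = add W (phi X) (phi Y)"
    and phi_smul: "\<And>c X. X \<in> carr A \<Longrightarrow> phi (smul A c X) = smul W c (phi X)"
    and u: "u \<in> cent A T" and v: "v \<in> cent A T"
    and eq: "\<And>d. d \<in> cent A T \<Longrightarrow> phi (mul A u d) = phi (mul A v d)"
  shows "u = v"
proof -
  interpret W: k_algebra W by (rule W)
  have uv: "u \<in> carr A" "v \<in> carr A" using u v cent_carr by blast+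
  have "phi (mul A (sub u v) d) = zero W" if d: "d \<in> cent A T" for d
  proof -
    have dc: "d \<in> carr A" using d cent_carr by blast
    have "phi (mul A (sub u v) d) = phi (sub (mul A u d) (mul A v d))"
      using uv dc by (simp add: mul_sub_left)
    also have "\<dots> = W.sub (phi (mul A u d)) (phi (mul A v d))"
      using uv dc by (simp add: sub_def W.sub_def phi_add phi_smul)
    also have "\<dots> = zero W" using eq[OF d] uv dc phi_carr by simp
    finally show ?thesis .
  qed
  moreover have "sub u v \<in> cent A T" using T u v by (rule cent_sub)
  ultimately have "sub u v = zero A" using faithful unfolding faithful_on_def by blast
  then show "u = v" using uv by (rule sub_eq_zero[rotated 2])
qed

end

lemma fsum_hom:
  assumes "k_algebra A" "k_algebra B" "\<forall>i\<in>I. f i \<in> carr A"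
    "\<And>x y. x \<in> carr A \<Longrightarrow> y \<in> carr A \<Longrightarrow> h (add A x y) = add B (h x) (h y)"
    "h (zero A) = zero B" "\<And>x. x \<in> carr A \<Longrightarrow> h x \<in> carr B"
  shows "h (fsum A f I) = fsum B (\<lambda>i. h (f i)) I"
  using assms(3)
proof (induction I rule: infinite_finite_induct)
  case (insert x F)
  have "h (fsum A f (insert x F)) = h (add A (f x) (fsum A f F))"
    using insert k_algebra.fsum_insert[OF assms(1), of F x f] by simp
  also have "\<dots> = add B (h (f x)) (h (fsum A f F))"
    using insert assms k_algebra.fsum_closed[OF assms(1), of F f] by simp
  also have "\<dots> = fsum B (\<lambda>i. h (f i)) (insert x F)"
    using insert assms k_algebra.fsum_insert[OF assms(2), of F x "\<lambda>i. h (f i)"] by (simp add: comp_def)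
  finally show ?case .
qed (auto simp: assms k_algebra.fsum_infinite[OF assms(1)] k_algebra.fsum_infinite[OF assms(2)] k_algebra.fsum_empty[OF assms(1)] k_algebra.fsum_empty[OF assms(2)])

section \<open>The free vector space on pairs\<close>

lemma lookup_tscale[simp]: "Poly_Mapping.lookup (tscale c v) p = c * Poly_Mapping.lookup v p"
  unfolding tscale_def by (simp add: Poly_Mapping.map.rep_eq when_def)

lemma lookup_tgen: "Poly_Mapping.lookup (tgen a b) p = (if p = (a, b) then 1 else 0)"
  unfolding tgen_def by (simp add: lookup_single when_def)

lemma keys_tgen[simp]: "Poly_Mapping.keys (tgen a b) = {(a, b)}"
  unfolding tgen_def by simp

lemma tscale_add: "tscale c (v + w) = tscale c v + tscale c w"
  by (rule poly_mapping_eqI) (simp add: lookup_add algebra_simps)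

lemma tscale_add_scalar: "tscale (c + d) v = tscale c v + tscale d v"
  by (rule poly_mapping_eqI) (simp add: lookup_add algebra_simps)

lemma tscale_tscale[simp]: "tscale c (tscale d v) = tscale (c * d) v"
  by (rule poly_mapping_eqI) simp

lemma tscale_one[simp]: "tscale 1 v = v"
  by (rule poly_mapping_eqI) simp

lemma tscale_zero_scalar[simp]: "tscale 0 v = 0"
  by (rule poly_mapping_eqI) simp

lemma tscale_zero[simp]: "tscale c 0 = 0"
  by (rule poly_mapping_eqI) simp

lemma tscale_minus: "tscale c (v - w) = tscale c v - tscale c w"
  by (rule poly_mapping_eqI) (simp add: lookup_minus algebra_simps)

lemma tscale_neg1: "tscale (-1) v = - v"
  by (rule poly_mapping_eqI) simp

lemma tscale_sum: "tscale c (sum f I) = sum (\<lambda>i. tscale c (f i)) I"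
  by (induction I rule: infinite_finite_induct) (simp_all add: tscale_add)

lemma keys_tscale: "Poly_Mapping.keys (tscale c v) \<subseteq> Poly_Mapping.keys v"
  by (auto simp: in_keys_iff)

lemma keys_minus: "Poly_Mapping.keys (v - w) \<subseteq> Poly_Mapping.keys v \<union> Poly_Mapping.keys w"
  by (auto simp: in_keys_iff lookup_minus)

lemma tgen_expansion: "v = (\<Sum>p\<in>Poly_Mapping.keys v. tscale (Poly_Mapping.lookup v p) (tgen (fst p) (snd p)))"
proof (rule poly_mapping_eqI)
  fix k
  have "Poly_Mapping.lookup (\<Sum>p\<in>Poly_Mapping.keys v. tscale (Poly_Mapping.lookup v p) (tgen (fst p) (snd p))) k
      = (\<Sum>p\<in>Poly_Mapping.keys v. Poly_Mapping.lookup v p * (if k = p then 1 else 0))"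
    by (simp add: lookup_sum lookup_tgen)
  also have "\<dots> = (\<Sum>p\<in>Poly_Mapping.keys v. if k = p then Poly_Mapping.lookup v p else 0)"
    by (rule sum.cong) auto
  also have "\<dots> = Poly_Mapping.lookup v k" by (simp add: in_keys_iff)
  finally show "Poly_Mapping.lookup v k = Poly_Mapping.lookup (\<Sum>p\<in>Poly_Mapping.keys v. tscale (Poly_Mapping.lookup v p) (tgen (fst p) (snd p))) k" by simp
qed

lemma tfree_iff: "v \<in> tfree R \<longleftrightarrow> Poly_Mapping.keys v \<subseteq> carr R \<times> carr R"
  unfolding tfree_def by simp

lemma tfree_add[intro]: "v \<in> tfree R \<Longrightarrow> w \<in> tfree R \<Longrightarrow> v + w \<in> tfree R"
  unfolding tfree_iff by (rule order_trans[OF keys_add], rule Un_least)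

lemma tfree_minus[intro]: "v \<in> tfree R \<Longrightarrow> w \<in> tfree R \<Longrightarrow> v - w \<in> tfree R"
  unfolding tfree_iff by (rule order_trans[OF keys_minus], rule Un_least)

lemma tfree_tscale[intro]: "v \<in> tfree R \<Longrightarrow> tscale c v \<in> tfree R"
  unfolding tfree_iff by (rule order_trans[OF keys_tscale])

lemma tfree_zero[simp, intro]: "0 \<in> tfree R"
  unfolding tfree_iff by simp

lemma tfree_tgen[intro]: "a \<in> carr R \<Longrightarrow> b \<in> carr R \<Longrightarrow> tgen a b \<in> tfree R"
  unfolding tfree_iff by simp

lemma tfree_sum[intro]: "(\<And>i. i \<in> I \<Longrightarrow> f i \<in> tfree R) \<Longrightarrow> sum f I \<in> tfree R"
proof (induction I rule: infinite_finite_induct)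
  case (insert x F)
  have "f x \<in> tfree R" "sum f F \<in> tfree R" using insert by simp_all
  then show ?case using insert(1,2) by (simp add: tfree_add)
qed simp_all

lemma tfree_keys: "v \<in> tfree R \<Longrightarrow> p \<in> Poly_Mapping.keys v \<Longrightarrow> fst p \<in> carr R \<and> snd p \<in> carr R"
proof -
  assume "v \<in> tfree R" "p \<in> Poly_Mapping.keys v"
  then have "p \<in> carr R \<times> carr R" unfolding tfree_iff by (rule subsetD)
  then show ?thesis by (simp add: mem_Times_iff)
qed

lemma tfree_induct[consumes 1, case_names zero add_tgen]:
  assumes v: "v \<in> tfree R" and zero: "P 0"
    and add_tgen: "\<And>a b c w. a \<in> carr R \<Longrightarrow> b \<in> carr R \<Longrightarrow> w \<in> tfree R \<Longrightarrow> P w \<Longrightarrow>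
      P (tscale c (tgen a b) + w)"
  shows "P v"
proof -
  have "P (\<Sum>p\<in>K. tscale (f p) (tgen (fst p) (snd p)))" if "finite K" "K \<subseteq> carr R \<times> carr R" for K f
    using that
  proof (induction K rule: finite_induct)
    case (insert p K)
    have "(\<Sum>q\<in>K. tscale (f q) (tgen (fst q) (snd q))) \<in> tfree R"
      using insert(4) by (intro tfree_sum tfree_tscale tfree_tgen) (auto simp: mem_Times_iff)
    then have "P (tscale (f p) (tgen (fst p) (snd p)) + (\<Sum>q\<in>K. tscale (f q) (tgen (fst q) (snd q))))"
      using insert by (intro add_tgen) (auto simp: mem_Times_iff)
    then show ?case using insert(1,2) by simp
  qed (simp add: zero)
  from this[of "Poly_Mapping.keys v" "Poly_Mapping.lookup v"] show ?thesis
    using v tgen_expansion[of v] unfolding tfree_iff by simp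
qed

definition tgen_prod :: "('k::field, 'a) kalg \<Rightarrow> ('a \<Rightarrow> 'a) \<Rightarrow> 'a \<times> 'a \<Rightarrow> 'a \<times> 'a \<Rightarrow> ('k, 'a) free2" where
  "tgen_prod R E p p' = tgen (mul R (fst p) (E (mul R (snd p) (fst p')))) (snd p')"

lemma tmul_raw_tgen_prod: "tmul_raw R E v w =
   (\<Sum>p\<in>Poly_Mapping.keys v. \<Sum>p'\<in>Poly_Mapping.keys w. tscale (Poly_Mapping.lookup v p * Poly_Mapping.lookup w p') (tgen_prod R E p p'))"
  unfolding tmul_raw_def tgen_prod_def by simp

lemma tmul_raw_superset:
  assumes "finite P" "finite P'" "Poly_Mapping.keys v \<subseteq> P" "Poly_Mapping.keys w \<subseteq> P'"
  shows "tmul_raw R E v w = (\<Sum>p\<in>P. \<Sum>p'\<in>P'. tscale (Poly_Mapping.lookup v p * Poly_Mapping.lookup w p') (tgen_prod R E p p'))"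
proof -
  have "tmul_raw R E v w = (\<Sum>p\<in>Poly_Mapping.keys v. \<Sum>p'\<in>P'. tscale (Poly_Mapping.lookup v p * Poly_Mapping.lookup w p') (tgen_prod R E p p'))"
    unfolding tmul_raw_tgen_prod
    by (rule sum.cong[OF refl], rule sum.mono_neutral_left) (use assms in \<open>auto simp: in_keys_iff\<close>)
  also have "\<dots> = (\<Sum>p\<in>P. \<Sum>p'\<in>P'. tscale (Poly_Mapping.lookup v p * Poly_Mapping.lookup w p') (tgen_prod R E p p'))"
    by (rule sum.mono_neutral_left) (use assms in \<open>auto simp: in_keys_iff\<close>)
  finally show ?thesis .
qed

lemma tmul_add_left: "tmul_raw R E (v + v') w = tmul_raw R E v w + tmul_raw R E v' w"
proof -
  let ?P = "Poly_Mapping.keys v \<union> Poly_Mapping.keys v'"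
  have k: "Poly_Mapping.keys (v + v') \<subseteq> ?P" by (rule keys_add)
  have e1: "tmul_raw R E (v + v') w = (\<Sum>p\<in>?P. \<Sum>p'\<in>Poly_Mapping.keys w. tscale (Poly_Mapping.lookup (v + v') p * Poly_Mapping.lookup w p') (tgen_prod R E p p'))"
    by (rule tmul_raw_superset) (use k in auto)
  have e2: "tmul_raw R E v w = (\<Sum>p\<in>?P. \<Sum>p'\<in>Poly_Mapping.keys w. tscale (Poly_Mapping.lookup v p * Poly_Mapping.lookup w p') (tgen_prod R E p p'))"
    by (rule tmul_raw_superset) auto
  have e3: "tmul_raw R E v' w = (\<Sum>p\<in>?P. \<Sum>p'\<in>Poly_Mapping.keys w. tscale (Poly_Mapping.lookup v' p * Poly_Mapping.lookup w p') (tgen_prod R E p p'))"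
    by (rule tmul_raw_superset) auto
  show ?thesis unfolding e1 e2 e3
    by (simp only: lookup_add distrib_right tscale_add_scalar sum.distrib)
qed

lemma tmul_add_right: "tmul_raw R E v (w + w') = tmul_raw R E v w + tmul_raw R E v w'"
proof -
  let ?P = "Poly_Mapping.keys w \<union> Poly_Mapping.keys w'"
  have k: "Poly_Mapping.keys (w + w') \<subseteq> ?P" by (rule keys_add)
  have e1: "tmul_raw R E v (w + w') = (\<Sum>p\<in>Poly_Mapping.keys v. \<Sum>p'\<in>?P. tscale (Poly_Mapping.lookup v p * Poly_Mapping.lookup (w + w') p') (tgen_prod R E p p'))"
    by (rule tmul_raw_superset) (use k in auto)
  have e2: "tmul_raw R E v w = (\<Sum>p\<in>Poly_Mapping.keys v. \<Sum>p'\<in>?P. tscale (Poly_Mapping.lookup v p * Poly_Mapping.lookup w p') (tgen_prod R E p p'))"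
    by (rule tmul_raw_superset) auto
  have e3: "tmul_raw R E v w' = (\<Sum>p\<in>Poly_Mapping.keys v. \<Sum>p'\<in>?P. tscale (Poly_Mapping.lookup v p * Poly_Mapping.lookup w' p') (tgen_prod R E p p'))"
    by (rule tmul_raw_superset) auto
  show ?thesis unfolding e1 e2 e3
    by (simp only: lookup_add distrib_left tscale_add_scalar sum.distrib)
qed

lemma tmul_scale_left: "tmul_raw R E (tscale c v) w = tscale c (tmul_raw R E v w)"
proof -
  have e1: "tmul_raw R E (tscale c v) w = (\<Sum>p\<in>Poly_Mapping.keys v. \<Sum>p'\<in>Poly_Mapping.keys w. tscale (Poly_Mapping.lookup (tscale c v) p * Poly_Mapping.lookup w p') (tgen_prod R E p p'))"
    by (rule tmul_raw_superset) (auto dest: keys_tscale[THEN subsetD])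
  show ?thesis unfolding e1 unfolding tmul_raw_tgen_prod tscale_sum
    by (simp only: lookup_tscale tscale_tscale mult.assoc)
qed

lemma tmul_scale_right: "tmul_raw R E v (tscale c w) = tscale c (tmul_raw R E v w)"
proof -
  have e1: "tmul_raw R E v (tscale c w) = (\<Sum>p\<in>Poly_Mapping.keys v. \<Sum>p'\<in>Poly_Mapping.keys w. tscale (Poly_Mapping.lookup v p * Poly_Mapping.lookup (tscale c w) p') (tgen_prod R E p p'))"
    by (rule tmul_raw_superset) (auto dest: keys_tscale[THEN subsetD])
  show ?thesis unfolding e1 unfolding tmul_raw_tgen_prod tscale_sum
    by (simp only: lookup_tscale tscale_tscale mult.assoc mult.left_commute)
qed

lemma tmul_zero_left[simp]: "tmul_raw R E 0 w = 0"
  by (simp add: tmul_raw_tgen_prod)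

lemma tmul_zero_right[simp]: "tmul_raw R E v 0 = 0"
  by (simp add: tmul_raw_tgen_prod)

lemma tmul_minus_left: "tmul_raw R E (v - v') w = tmul_raw R E v w - tmul_raw R E v' w"
proof -
  have "tmul_raw R E ((v - v') + v') w = tmul_raw R E (v - v') w + tmul_raw R E v' w" by (rule tmul_add_left)
  then show ?thesis by (simp add: eq_diff_eq)
qed

lemma tmul_minus_right: "tmul_raw R E v (w - w') = tmul_raw R E v w - tmul_raw R E v w'"
proof -
  have "tmul_raw R E v ((w - w') + w') = tmul_raw R E v (w - w') + tmul_raw R E v w'" by (rule tmul_add_right)
  then show ?thesis by (simp add: eq_diff_eq)
qed

lemma tmul_sum_left: "tmul_raw R E (sum f I) w = (\<Sum>i\<in>I. tmul_raw R E (f i) w)"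
  by (induction I rule: infinite_finite_induct) (simp_all add: tmul_add_left)

lemma tmul_sum_right: "tmul_raw R E v (sum f I) = (\<Sum>i\<in>I. tmul_raw R E v (f i))"
  by (induction I rule: infinite_finite_induct) (simp_all add: tmul_add_right)

lemma tmul_tgen: "tmul_raw R E (tgen a b) (tgen c d) = tgen (mul R a (E (mul R b c))) d"
  by (simp add: tmul_raw_tgen_prod lookup_tgen tgen_prod_def)

section \<open>The tensor product over a subalgebra\<close>

locale cond_exp = k_algebra R for R :: "('k::field, 'a) kalg" +
  fixes S :: "'a set" and E :: "'a \<Rightarrow> 'a"
  assumes subalg: "subalgebra R S" and bim: "bimodule_map R S E"
begin

lemma S_closed[simp, intro]: "x \<in> S \<Longrightarrow> x \<in> carr R"
  using subalg unfolding subalgebra_def by blast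

lemma one_S[simp, intro]: "one R \<in> S"
  using subalg unfolding subalgebra_def by blast

lemma smul_S[simp, intro]: "x \<in> S \<Longrightarrow> smul R c x \<in> S"
  using subalg unfolding subalgebra_def by blast

lemma E_in_S[simp, intro]: "m \<in> carr R \<Longrightarrow> E m \<in> S"
  using bim unfolding bimodule_map_def by blast

lemma E_closed[simp, intro]: "m \<in> carr R \<Longrightarrow> E m \<in> carr R"
  using E_in_S S_closed by blast

lemma E_add: "m \<in> carr R \<Longrightarrow> m' \<in> carr R \<Longrightarrow> E (add R m m') = add R (E m) (E m')"
  using bim unfolding bimodule_map_def by blast

lemma E_left: "x \<in> S \<Longrightarrow> m \<in> carr R \<Longrightarrow> E (mul R x m) = mul R x (E m)"
  using bim unfolding bimodule_map_def by blast

lemma E_right: "x \<in> S \<Longrightarrow> m \<in> carr R \<Longrightarrow> E (mul R m x) = mul R (E m) x"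
  using bim unfolding bimodule_map_def by blast

lemma E_smul: "m \<in> carr R \<Longrightarrow> E (smul R c m) = smul R c (E m)"
proof -
  assume m: "m \<in> carr R"
  have "smul R c m = mul R (smul R c (one R)) m" using m by simp
  then have "E (smul R c m) = mul R (smul R c (one R)) (E m)"
    using E_left[of "smul R c (one R)" m] m by simp
  then show ?thesis using m by simp
qed

abbreviation TR where "TR \<equiv> trel R S"
abbreviation TF where "TF \<equiv> tfree R"

lemma trel_tfree: "x \<in> TR \<Longrightarrow> x \<in> TF"
proof (induction rule: trel.induct)
  case trel_zero then show ?case by simp
next
  case (trel_add v w) then show ?case by (simp add: tfree_add)
next
  case (trel_scale v c) then show ?case by (simp add: tfree_tscale)
next
  case (trel_addl a a' b) then show ?case by (intro tfree_minus tfree_tgen closed)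
next
  case (trel_addr a b b') then show ?case by (intro tfree_minus tfree_tgen closed)
next
  case (trel_smull a b c) then show ?case by (intro tfree_minus tfree_tgen tfree_tscale closed)
next
  case (trel_smulr a b c) then show ?case by (intro tfree_minus tfree_tgen tfree_tscale closed)
next
  case (trel_bal a b s) then show ?case by (intro tfree_minus tfree_tgen closed) simp_all
qed

lemma trel_uminus: "x \<in> TR \<Longrightarrow> - x \<in> TR"
proof -
  assume "x \<in> TR"
  then have "tscale (-1) x \<in> TR" by (rule trel_scale)
  then show ?thesis by (simp add: tscale_neg1)
qed

lemma trel_minus: "x \<in> TR \<Longrightarrow> y \<in> TR \<Longrightarrow> x - y \<in> TR"
proof -
  assume "x \<in> TR" "y \<in> TR"
  then have "x + - y \<in> TR" by (intro trel_add trel_uminus)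
  then show ?thesis by simp
qed

lemma trel_sum: "(\<And>i. i \<in> I \<Longrightarrow> f i \<in> TR) \<Longrightarrow> sum f I \<in> TR"
proof (induction I rule: infinite_finite_induct)
  case (insert x F)
  then show ?case by (simp add: trel_add)
qed (simp_all add: trel_zero)

lemma trel_sym: "x - y \<in> TR \<Longrightarrow> y - x \<in> TR"
proof -
  assume "x - y \<in> TR"
  then have "- (x - y) \<in> TR" by (rule trel_uminus)
  then show ?thesis by simp
qed

lemma trel_trans: "x - y \<in> TR \<Longrightarrow> y - z \<in> TR \<Longrightarrow> x - z \<in> TR"
proof -
  assume "x - y \<in> TR" "y - z \<in> TR"
  then have "(x - y) + (y - z) \<in> TR" by (rule trel_add)
  then show ?thesis by simp
qed

lemma tclass_eq: "tclass R S v = tclass R S w \<longleftrightarrow> v - w \<in> TR"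
proof
  assume h: "tclass R S v = tclass R S w"
  have "v \<in> tclass R S v" unfolding tclass_def using trel_zero by force
  then have "v \<in> tclass R S w" using h by simp
  then obtain r where "v = w + r" "r \<in> TR" unfolding tclass_def by blast
  then show "v - w \<in> TR" by simp
next
  assume h: "v - w \<in> TR"
  show "tclass R S v = tclass R S w"
  proof (rule set_eqI)
    fix x
    show "x \<in> tclass R S v \<longleftrightarrow> x \<in> tclass R S w"
    proof
      assume "x \<in> tclass R S v"
      then obtain r where "x = v + r" "r \<in> TR" unfolding tclass_def by blast
      moreover have "(v - w) + r \<in> TR" using h \<open>r \<in> TR\<close> by (rule trel_add)
      ultimately show "x \<in> tclass R S w" unfolding tclass_def
        by (intro CollectI exI[of _ "(v - w) + r"]) simp
    next
      assume "x \<in> tclass R S w"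
      then obtain r where "x = w + r" "r \<in> TR" unfolding tclass_def by blast
      moreover have "(w - v) + r \<in> TR" using trel_sym[OF h] \<open>r \<in> TR\<close> by (rule trel_add)
      ultimately show "x \<in> tclass R S v" unfolding tclass_def
        by (intro CollectI exI[of _ "(w - v) + r"]) simp
    qed
  qed
qed

lemma trep_tclass: "trep (tclass R S v) - v \<in> TR"
proof -
  have "v \<in> tclass R S v" unfolding tclass_def using trel_zero by force
  then have "trep (tclass R S v) \<in> tclass R S v" unfolding trep_def by (rule someI)
  then obtain r where "trep (tclass R S v) = v + r" "r \<in> TR" unfolding tclass_def by blast
  then show ?thesis by simp
qed

definition linear_mod_trel :: "(('k, 'a) free2 \<Rightarrow> ('k, 'a) free2) \<Rightarrow> bool" where
  "linear_mod_trel F \<longleftrightarrow> (\<forall>v\<in>TF. \<forall>w\<in>TF. F (v + w) - (F v + F w) \<in> TR) \<and>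
                 (\<forall>c. \<forall>v\<in>TF. F (tscale c v) - tscale c (F v) \<in> TR)"

lemma linear_mod_trel_vanishes:
  assumes lm: "linear_mod_trel F" and gen: "\<And>a b. a \<in> carr R \<Longrightarrow> b \<in> carr R \<Longrightarrow> F (tgen a b) \<in> TR"
    and v: "v \<in> TF"
  shows "F v \<in> TR"
  using v
proof (induction rule: tfree_induct)
  have add: "\<And>v w. v \<in> TF \<Longrightarrow> w \<in> TF \<Longrightarrow> F (v + w) - (F v + F w) \<in> TR"
    and sc: "\<And>c v. v \<in> TF \<Longrightarrow> F (tscale c v) - tscale c (F v) \<in> TR"
    using lm unfolding linear_mod_trel_def by blast+
  {
    case zero
    have "F (0 + 0) - (F 0 + F 0) \<in> TR" using add[of 0 0] by simp
    then show ?case using trel_uminus by fastforce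
  next
    case (add_tgen a b c w)
    let ?t = "tscale c (tgen a b)"
    have "F ?t - tscale c (F (tgen a b)) \<in> TR" using sc add_tgen by blast
    moreover have "tscale c (F (tgen a b)) \<in> TR" using gen add_tgen by (intro trel_scale)
    ultimately have "F ?t \<in> TR" using trel_add by fastforce
    then have "F ?t + F w \<in> TR" using add_tgen.IH by (rule trel_add)
    moreover have "F (?t + w) - (F ?t + F w) \<in> TR" using add_tgen by (intro add) auto
    ultimately show ?case using trel_add by fastforce
  }
qed

lemma linear_imp_linear_mod_trel:
  assumes "\<And>v w. v \<in> TF \<Longrightarrow> w \<in> TF \<Longrightarrow> F (v + w) = F v + F w"
    and "\<And>c v. v \<in> TF \<Longrightarrow> F (tscale c v) = tscale c (F v)"
  shows "linear_mod_trel F"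
  unfolding linear_mod_trel_def
proof (intro conjI ballI allI)
  fix v w assume "v \<in> TF" "w \<in> TF"
  then show "F (v + w) - (F v + F w) \<in> TR" using assms(1) trel_zero by simp
next
  fix c v assume "v \<in> TF"
  then show "F (tscale c v) - tscale c (F v) \<in> TR" using assms(2) trel_zero by simp
qed

lemma linear_mod_trel_diff:
  assumes "linear_mod_trel F" "linear_mod_trel G" shows "linear_mod_trel (\<lambda>v. F v - G v)"
proof -
  have a1: "\<And>v w. v \<in> TF \<Longrightarrow> w \<in> TF \<Longrightarrow> F (v + w) - (F v + F w) \<in> TR"
    and s1: "\<And>c v. v \<in> TF \<Longrightarrow> F (tscale c v) - tscale c (F v) \<in> TR"
    using assms(1) unfolding linear_mod_trel_def by blast+
  have a2: "\<And>v w. v \<in> TF \<Longrightarrow> w \<in> TF \<Longrightarrow> G (v + w) - (G v + G w) \<in> TR"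
    and s2: "\<And>c v. v \<in> TF \<Longrightarrow> G (tscale c v) - tscale c (G v) \<in> TR"
    using assms(2) unfolding linear_mod_trel_def by blast+
  have e1: "F (v + w) - G (v + w) - ((F v - G v) + (F w - G w)) =
        (F (v + w) - (F v + F w)) - (G (v + w) - (G v + G w))" for v w
    by (simp add: algebra_simps)
  have e2: "F (tscale c v) - G (tscale c v) - tscale c (F v - G v) =
        (F (tscale c v) - tscale c (F v)) - (G (tscale c v) - tscale c (G v))" for c v
    by (simp add: algebra_simps tscale_minus)
  show ?thesis unfolding linear_mod_trel_def
  proof (intro conjI ballI allI)
    fix v w assume "v \<in> TF" "w \<in> TF"
    then show "F (v + w) - G (v + w) - ((F v - G v) + (F w - G w)) \<in> TR"
      unfolding e1 by (intro trel_minus a1 a2)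
  next
    fix c v assume "v \<in> TF"
    then show "F (tscale c v) - G (tscale c v) - tscale c (F v - G v) \<in> TR"
      unfolding e2 by (intro trel_minus s1 s2)
  qed
qed

lemma linear_mod_trel_eqI:
  assumes "linear_mod_trel F" "linear_mod_trel G"
    and "\<And>a b. a \<in> carr R \<Longrightarrow> b \<in> carr R \<Longrightarrow> F (tgen a b) - G (tgen a b) \<in> TR"
    and "v \<in> TF"
  shows "F v - G v \<in> TR"
  using linear_mod_trel_vanishes[OF linear_mod_trel_diff[OF assms(1,2)]] assms(3,4) by blast

end

lemma linear_eq_on_tfree:
  assumes F: "\<And>v w. v \<in> tfree R \<Longrightarrow> w \<in> tfree R \<Longrightarrow> F (v + w) = F v + F w"
    "\<And>c v. v \<in> tfree R \<Longrightarrow> F (tscale c v) = tscale c (F v)"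
    and G: "\<And>v w. v \<in> tfree R \<Longrightarrow> w \<in> tfree R \<Longrightarrow> G (v + w) = G v + G w"
    "\<And>c v. v \<in> tfree R \<Longrightarrow> G (tscale c v) = tscale c (G v)"
    and gen: "\<And>a b. a \<in> carr R \<Longrightarrow> b \<in> carr R \<Longrightarrow> F (tgen a b) = G (tgen a b)"
    and v: "v \<in> tfree R"
  shows "F v = G v"
  using v
proof (induction rule: tfree_induct)
  case zero
  show ?case using F(2)[of 0 0] G(2)[of 0 0] by simp
next
  case (add_tgen a b c w)
  then show ?case by (simp add: F G gen tfree_tscale tfree_tgen)
qed

definition lin_ext :: "('k::field, 'a) kalg \<Rightarrow> ('a \<times> 'a \<Rightarrow> 'a) \<Rightarrow> ('k, 'a) free2 \<Rightarrow> 'a" where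
  "lin_ext R g v = fsum R (\<lambda>p. smul R (Poly_Mapping.lookup v p) (g p)) (Poly_Mapping.keys v)"

context cond_exp
begin

lemma tgen_prod_tfree: "p \<in> Poly_Mapping.keys v \<Longrightarrow> p' \<in> Poly_Mapping.keys w \<Longrightarrow> v \<in> TF \<Longrightarrow> w \<in> TF \<Longrightarrow> tgen_prod R E p p' \<in> TF"
proof -
  assume a: "p \<in> Poly_Mapping.keys v" "p' \<in> Poly_Mapping.keys w" "v \<in> TF" "w \<in> TF"
  have "fst p \<in> carr R" "snd p \<in> carr R" using tfree_keys[OF a(3) a(1)] by simp_all
  moreover have "fst p' \<in> carr R" "snd p' \<in> carr R" using tfree_keys[OF a(4) a(2)] by simp_all
  ultimately show ?thesis unfolding tgen_prod_def by (intro tfree_tgen closed E_closed)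
qed

lemma tmul_tfree[intro]: "v \<in> TF \<Longrightarrow> w \<in> TF \<Longrightarrow> tmul_raw R E v w \<in> TF"
  unfolding tmul_raw_tgen_prod by (intro tfree_sum tfree_tscale tgen_prod_tfree)

lemma tmul_trel_of_tgen_right:
  assumes "\<And>c d. c \<in> carr R \<Longrightarrow> d \<in> carr R \<Longrightarrow> tmul_raw R E g (tgen c d) \<in> TR" "w \<in> TF"
  shows "tmul_raw R E g w \<in> TR"
  by (rule linear_mod_trel_vanishes[OF linear_imp_linear_mod_trel]) (simp_all add: tmul_add_right tmul_scale_right assms)

lemma tmul_trel_of_tgen_left:
  assumes "\<And>a b. a \<in> carr R \<Longrightarrow> b \<in> carr R \<Longrightarrow> tmul_raw R E (tgen a b) g \<in> TR" "v \<in> TF"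
  shows "tmul_raw R E v g \<in> TR"
  by (rule linear_mod_trel_vanishes[where F="\<lambda>v. tmul_raw R E v g", OF linear_imp_linear_mod_trel]) (simp_all add: tmul_add_left tmul_scale_left assms)

lemma trel_tmul_tgen:
  "x \<in> TR \<Longrightarrow> c \<in> carr R \<Longrightarrow> d \<in> carr R \<Longrightarrow> tmul_raw R E x (tgen c d) \<in> TR"
proof (induction rule: trel.induct)
  case (trel_addl a a' b)
  then show ?case by (simp add: tmul_minus_left tmul_tgen distr trel.trel_addl)
next
  case (trel_addr a b b')
  then show ?case by (simp add: tmul_minus_left tmul_tgen distr distl E_add trel.trel_addl)
next
  case (trel_smull a b k)
  then show ?case by (simp add: tmul_minus_left tmul_scale_left tmul_tgen trel.trel_smull)
next
  case (trel_smulr a b k)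
  then show ?case by (simp add: tmul_minus_left tmul_scale_left tmul_tgen E_smul trel.trel_smull)
next
  case (trel_bal a b s)
  then show ?case by (simp add: tmul_minus_left tmul_tgen mul_assoc E_left trel.trel_zero)
qed (simp_all add: tmul_add_left tmul_scale_left trel.intros)

lemma tgen_tmul_trel:
  "x \<in> TR \<Longrightarrow> a \<in> carr R \<Longrightarrow> b \<in> carr R \<Longrightarrow> tmul_raw R E (tgen a b) x \<in> TR"
proof (induction rule: trel.induct)
  case (trel_addl c c' d)
  then show ?case by (simp add: tmul_minus_right tmul_tgen distl E_add trel.trel_addl)
next
  case (trel_addr c d d')
  then show ?case by (simp add: tmul_minus_right tmul_tgen trel.trel_addr)
next
  case (trel_smull c d k)
  then show ?case by (simp add: tmul_minus_right tmul_scale_right tmul_tgen E_smul trel.trel_smull)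
next
  case (trel_smulr c d k)
  then show ?case by (simp add: tmul_minus_right tmul_scale_right tmul_tgen trel.trel_smulr)
next
  case (trel_bal c d s)
  then show ?case
    by (simp add: tmul_minus_right tmul_tgen mul_assoc[symmetric] E_right trel.trel_bal)
qed (simp_all add: tmul_add_right tmul_scale_right trel.intros)

lemma tmul_trel_left: "x \<in> TR \<Longrightarrow> w \<in> TF \<Longrightarrow> tmul_raw R E x w \<in> TR"
  by (rule tmul_trel_of_tgen_right) (simp_all add: trel_tmul_tgen)

lemma tmul_trel_right: "x \<in> TR \<Longrightarrow> v \<in> TF \<Longrightarrow> tmul_raw R E v x \<in> TR"
  by (rule tmul_trel_of_tgen_left) (simp_all add: tgen_tmul_trel)

lemma tgen_zero_left: "b \<in> carr R \<Longrightarrow> tgen (zero R) b \<in> TR"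
proof -
  assume b: "b \<in> carr R"
  have "tgen (add R (zero R) (zero R)) b - tgen (zero R) b - tgen (zero R) b \<in> TR"
    using b by (intro trel.trel_addl) simp_all
  then have "- tgen (zero R) b \<in> TR" by simp
  then have "- (- tgen (zero R) b) \<in> TR" by (rule trel_uminus)
  then show ?thesis by simp
qed

lemma tgen_zero_right: "a \<in> carr R \<Longrightarrow> tgen a (zero R) \<in> TR"
proof -
  assume a: "a \<in> carr R"
  have "tgen a (add R (zero R) (zero R)) - tgen a (zero R) - tgen a (zero R) \<in> TR"
    using a by (intro trel.trel_addr) simp_all
  then have "- tgen a (zero R) \<in> TR" by simp
  then have "- (- tgen a (zero R)) \<in> TR" by (rule trel_uminus)
  then show ?thesis by simp
qed

lemma tgen_fsum_left:
  assumes "finite I" "\<forall>i\<in>I. f i \<in> carr R" "b \<in> carr R"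
  shows "tgen (fsum R f I) b - (\<Sum>i\<in>I. tgen (f i) b) \<in> TR"
  using assms
proof (induction I rule: finite_induct)
  case empty then show ?case using tgen_zero_left by simp
next
  case (insert x F)
  have fs: "fsum R f F \<in> carr R" using insert by (intro fsum_closed) simp
  have "tgen (add R (f x) (fsum R f F)) b - tgen (f x) b - tgen (fsum R f F) b \<in> TR"
    using insert fs by (intro trel.trel_addl) simp_all
  moreover have "tgen (fsum R f F) b - (\<Sum>i\<in>F. tgen (f i) b) \<in> TR" using insert by simp
  ultimately have "(tgen (add R (f x) (fsum R f F)) b - tgen (f x) b - tgen (fsum R f F) b)
     + (tgen (fsum R f F) b - (\<Sum>i\<in>F. tgen (f i) b)) \<in> TR" by (rule trel.trel_add)
  moreover have "fsum R f (insert x F) = add R (f x) (fsum R f F)"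
    using insert by (intro fsum_insert) simp_all
  ultimately show ?case using insert(1,2) by (simp add: algebra_simps)
qed

lemma tgen_fsum_right:
  assumes "finite I" "\<forall>i\<in>I. f i \<in> carr R" "a \<in> carr R"
  shows "tgen a (fsum R f I) - (\<Sum>i\<in>I. tgen a (f i)) \<in> TR"
  using assms
proof (induction I rule: finite_induct)
  case empty then show ?case using tgen_zero_right by simp
next
  case (insert x F)
  have fs: "fsum R f F \<in> carr R" using insert by (intro fsum_closed) simp
  have "tgen a (add R (f x) (fsum R f F)) - tgen a (f x) - tgen a (fsum R f F) \<in> TR"
    using insert fs by (intro trel.trel_addr) simp_all
  moreover have "tgen a (fsum R f F) - (\<Sum>i\<in>F. tgen a (f i)) \<in> TR" using insert by simp
  ultimately have "(tgen a (add R (f x) (fsum R f F)) - tgen a (f x) - tgen a (fsum R f F))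
     + (tgen a (fsum R f F) - (\<Sum>i\<in>F. tgen a (f i))) \<in> TR" by (rule trel.trel_add)
  moreover have "fsum R f (insert x F) = add R (f x) (fsum R f F)"
    using insert by (intro fsum_insert) simp_all
  ultimately show ?case using insert(1,2) by (simp add: algebra_simps)
qed

lemma lin_ext_superset:
  assumes gc: "\<And>a b. a \<in> carr R \<Longrightarrow> b \<in> carr R \<Longrightarrow> g (a, b) \<in> carr R"
    and P: "finite P" "Poly_Mapping.keys v \<subseteq> P" "P \<subseteq> carr R \<times> carr R"
  shows "lin_ext R g v = fsum R (\<lambda>p. smul R (Poly_Mapping.lookup v p) (g p)) P"
  unfolding lin_ext_def
proof (rule fsum_mono_neutral[symmetric])
  show "finite P" "Poly_Mapping.keys v \<subseteq> P" by (fact P)+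
  show "\<forall>i\<in>P. smul R (Poly_Mapping.lookup v i) (g i) \<in> carr R"
  proof
    fix i assume "i \<in> P"
    then have "fst i \<in> carr R" "snd i \<in> carr R" using P(3) by (auto simp: mem_Times_iff)
    then have "g i \<in> carr R" using gc[of "fst i" "snd i"] by simp
    then show "smul R (Poly_Mapping.lookup v i) (g i) \<in> carr R" by simp
  qed
  show "\<forall>i\<in>P - Poly_Mapping.keys v. smul R (Poly_Mapping.lookup v i) (g i) = zero R"
  proof
    fix i assume i: "i \<in> P - Poly_Mapping.keys v"
    then have "fst i \<in> carr R" "snd i \<in> carr R" using P(3) by (auto simp: mem_Times_iff)
    then have "g i \<in> carr R" using gc[of "fst i" "snd i"] by simp
    moreover have "Poly_Mapping.lookup v i = 0" using i by (simp add: in_keys_iff)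
    ultimately show "smul R (Poly_Mapping.lookup v i) (g i) = zero R" by simp
  qed
qed

lemma pair_fun_closed:
  assumes gc: "\<And>a b. a \<in> carr R \<Longrightarrow> b \<in> carr R \<Longrightarrow> g (a, b) \<in> carr R"
  shows "P \<subseteq> carr R \<times> carr R \<Longrightarrow> \<forall>p\<in>P. g p \<in> carr R"
proof
  fix p assume "P \<subseteq> carr R \<times> carr R" "p \<in> P"
  then have "fst p \<in> carr R" "snd p \<in> carr R" by (auto simp: mem_Times_iff)
  then show "g p \<in> carr R" using gc[of "fst p" "snd p"] by simp
qed

lemma lin_ext_closed:
  assumes gc: "\<And>a b. a \<in> carr R \<Longrightarrow> b \<in> carr R \<Longrightarrow> g (a, b) \<in> carr R"
  shows "v \<in> TF \<Longrightarrow> lin_ext R g v \<in> carr R"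
  unfolding lin_ext_def using pair_fun_closed[where g=g, OF gc, of "Poly_Mapping.keys v"]
  by (intro fsum_closed) (simp add: tfree_iff)

lemma lin_ext_add:
  assumes gc: "\<And>a b. a \<in> carr R \<Longrightarrow> b \<in> carr R \<Longrightarrow> g (a, b) \<in> carr R"
    and vw: "v \<in> TF" "w \<in> TF"
  shows "lin_ext R g (v + w) = add R (lin_ext R g v) (lin_ext R g w)"
proof -
  let ?P = "Poly_Mapping.keys v \<union> Poly_Mapping.keys w"
  have P: "finite ?P" "?P \<subseteq> carr R \<times> carr R" using vw by (auto simp: tfree_iff)
  have gP: "\<forall>p\<in>?P. g p \<in> carr R" using pair_fun_closed[where g=g, OF gc P(2)] .
  have "lin_ext R g (v + w) = fsum R (\<lambda>p. smul R (Poly_Mapping.lookup (v + w) p) (g p)) ?P"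
    using P keys_add[of v w] by (intro lin_ext_superset[where g=g, OF gc]) simp_all
  also have "\<dots> = fsum R (\<lambda>p. add R (smul R (Poly_Mapping.lookup v p) (g p)) (smul R (Poly_Mapping.lookup w p) (g p))) ?P"
    using gP by (intro fsum_cong) (simp add: lookup_add smul_add_scalar)
  also have "\<dots> = add R (fsum R (\<lambda>p. smul R (Poly_Mapping.lookup v p) (g p)) ?P) (fsum R (\<lambda>p. smul R (Poly_Mapping.lookup w p) (g p)) ?P)"
    using gP by (intro fsum_add) simp_all
  also have "fsum R (\<lambda>p. smul R (Poly_Mapping.lookup v p) (g p)) ?P = lin_ext R g v"
    using P by (intro lin_ext_superset[where g=g, OF gc, symmetric]) auto
  also have "fsum R (\<lambda>p. smul R (Poly_Mapping.lookup w p) (g p)) ?P = lin_ext R g w"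
    using P by (intro lin_ext_superset[where g=g, OF gc, symmetric]) auto
  finally show ?thesis .
qed

lemma lin_ext_tscale:
  assumes gc: "\<And>a b. a \<in> carr R \<Longrightarrow> b \<in> carr R \<Longrightarrow> g (a, b) \<in> carr R"
    and v: "v \<in> TF"
  shows "lin_ext R g (tscale c v) = smul R c (lin_ext R g v)"
proof -
  let ?P = "Poly_Mapping.keys v"
  have P: "finite ?P" "?P \<subseteq> carr R \<times> carr R" using v by (auto simp: tfree_iff)
  have gP: "\<forall>p\<in>?P. g p \<in> carr R" using pair_fun_closed[where g=g, OF gc P(2)] .
  have "lin_ext R g (tscale c v) = fsum R (\<lambda>p. smul R (Poly_Mapping.lookup (tscale c v) p) (g p)) ?P"
    using P keys_tscale[of c v] by (intro lin_ext_superset[where g=g, OF gc]) simp_all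
  also have "\<dots> = fsum R (\<lambda>p. smul R c (smul R (Poly_Mapping.lookup v p) (g p))) ?P"
    using gP by (intro fsum_cong) simp
  also have "\<dots> = smul R c (lin_ext R g v)"
    unfolding lin_ext_def using gP by (intro fsum_smul) simp
  finally show ?thesis .
qed

lemma lin_ext_tgen:
  assumes gc: "\<And>a b. a \<in> carr R \<Longrightarrow> b \<in> carr R \<Longrightarrow> g (a, b) \<in> carr R"
    and ab: "a \<in> carr R" "b \<in> carr R"
  shows "lin_ext R g (tgen a b) = g (a, b)"
  unfolding lin_ext_def using gc[OF ab] by (simp add: lookup_tgen)

lemma lin_ext_zero[simp]: "lin_ext R g 0 = zero R"
  unfolding lin_ext_def by simp

lemma lin_ext_minus:
  assumes gc: "\<And>a b. a \<in> carr R \<Longrightarrow> b \<in> carr R \<Longrightarrow> g (a, b) \<in> carr R"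
    and vw: "v \<in> TF" "w \<in> TF"
  shows "lin_ext R g (v - w) = sub (lin_ext R g v) (lin_ext R g w)"
proof -
  have e: "v - w = v + tscale (-1) w" by (simp add: tscale_neg1)
  have "lin_ext R g (v + tscale (-1) w) = add R (lin_ext R g v) (smul R (-1) (lin_ext R g w))"
    using vw by (simp add: lin_ext_add[where g=g, OF gc] lin_ext_tscale[where g=g, OF gc] tfree_tscale)
  then show ?thesis unfolding sub_def e .
qed

lemma lin_ext_trel:
  assumes gc: "\<And>a b. a \<in> carr R \<Longrightarrow> b \<in> carr R \<Longrightarrow> g (a, b) \<in> carr R"
    and g_addl: "\<And>a a' b. a \<in> carr R \<Longrightarrow> a' \<in> carr R \<Longrightarrow> b \<in> carr R \<Longrightarrow> g (add R a a', b) = add R (g (a, b)) (g (a', b))"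
    and g_addr: "\<And>a b b'. a \<in> carr R \<Longrightarrow> b \<in> carr R \<Longrightarrow> b' \<in> carr R \<Longrightarrow> g (a, add R b b') = add R (g (a, b)) (g (a, b'))"
    and g_smull: "\<And>c a b. a \<in> carr R \<Longrightarrow> b \<in> carr R \<Longrightarrow> g (smul R c a, b) = smul R c (g (a, b))"
    and g_smulr: "\<And>c a b. a \<in> carr R \<Longrightarrow> b \<in> carr R \<Longrightarrow> g (a, smul R c b) = smul R c (g (a, b))"
    and g_bal: "\<And>a b x. a \<in> carr R \<Longrightarrow> b \<in> carr R \<Longrightarrow> x \<in> S \<Longrightarrow> g (mul R a x, b) = g (a, mul R x b)"
  shows "t \<in> TR \<Longrightarrow> lin_ext R g t = zero R"
proof (induction rule: trel.induct)
  case trel_zero then show ?case by simp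
next
  case (trel_add v w)
  then show ?case using trel_tfree by (simp add: lin_ext_add[where g=g, OF gc])
next
  case (trel_scale v c)
  then show ?case using trel_tfree by (simp add: lin_ext_tscale[where g=g, OF gc])
next
  case (trel_addl a a' b)
  then show ?case
    by (simp add: lin_ext_minus[where g=g, OF gc] tfree_minus tfree_tgen lin_ext_tgen[where g=g, OF gc] g_addl sub_sub_add_self gc)
next
  case (trel_addr a b b')
  then show ?case
    by (simp add: lin_ext_minus[where g=g, OF gc] tfree_minus tfree_tgen lin_ext_tgen[where g=g, OF gc] g_addr sub_sub_add_self gc)
next
  case (trel_smull a b c)
  then show ?case
    by (simp add: lin_ext_minus[where g=g, OF gc] tfree_tscale tfree_tgen lin_ext_tgen[where g=g, OF gc] lin_ext_tscale[where g=g, OF gc] g_smull gc)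
next
  case (trel_smulr a b c)
  then show ?case
    by (simp add: lin_ext_minus[where g=g, OF gc] tfree_tscale tfree_tgen lin_ext_tgen[where g=g, OF gc] lin_ext_tscale[where g=g, OF gc] g_smulr gc)
next
  case (trel_bal a b x)
  then show ?case
    by (simp add: lin_ext_minus[where g=g, OF gc] tfree_tgen lin_ext_tgen[where g=g, OF gc] g_bal gc)
qed

definition pair_mul where "pair_mul p = mul R (fst p) (snd p)"
definition pair_mul_E where "pair_mul_E p = mul R (fst p) (E (snd p))"

lemma pair_mul_closed: "a \<in> carr R \<Longrightarrow> b \<in> carr R \<Longrightarrow> pair_mul (a, b) \<in> carr R" unfolding pair_mul_def by simp
lemma pair_mul_E_closed: "a \<in> carr R \<Longrightarrow> b \<in> carr R \<Longrightarrow> pair_mul_E (a, b) \<in> carr R" unfolding pair_mul_E_def by simp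

lemma lin_ext_pair_mul_trel: "t \<in> TR \<Longrightarrow> lin_ext R pair_mul t = zero R"
  by (rule lin_ext_trel[where g=pair_mul, OF pair_mul_closed]) (simp_all add: pair_mul_def distr distl mul_assoc)

lemma lin_ext_pair_mul_E_trel: "t \<in> TR \<Longrightarrow> lin_ext R pair_mul_E t = zero R"
  by (rule lin_ext_trel[where g=pair_mul_E, OF pair_mul_E_closed]) (simp_all add: pair_mul_E_def distr distl mul_assoc E_add E_smul E_left)

end

section \<open>The basic construction\<close>

definition strongly_separable :: "('k::field, 'a) kalg \<Rightarrow> 'a set \<Rightarrow> ('a \<Rightarrow> 'a) \<Rightarrow> nat \<Rightarrow> (nat \<Rightarrow> 'a) \<Rightarrow> (nat \<Rightarrow> 'a) \<Rightarrow> 'k \<Rightarrow> bool" where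
 "strongly_separable R S E n r s lam \<longleftrightarrow> kalgebra R \<and> subalgebra R S \<and> bimodule_map R S E \<and> E (one R) = one R \<and>
   (\<forall>i<n. r i \<in> carr R \<and> s i \<in> carr R) \<and>
   (\<forall>m\<in>carr R. fsum R (\<lambda>i. mul R (E (mul R m (r i))) (s i)) {..<n} = m) \<and>
   (\<forall>m\<in>carr R. fsum R (\<lambda>i. mul R (r i) (E (mul R (s i) m))) {..<n} = m) \<and>
   lam \<noteq> 0 \<and> fsum R (\<lambda>i. mul R (r i) (s i)) {..<n} = smul R (inverse lam) (one R)"

locale basic_construction =
  fixes R :: "('k::field, 'a) kalg" and S :: "'a set" and E :: "'a \<Rightarrow> 'a"
    and n :: nat and r s :: "nat \<Rightarrow> 'a" and lam :: 'k
  assumes separable: "strongly_separable R S E n r s lam"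

sublocale basic_construction \<subseteq> cond_exp R S E
  using separable unfolding strongly_separable_def by (intro cond_exp.intro k_algebra.intro cond_exp_axioms.intro) simp_all

context basic_construction
begin

lemma E_one[simp]: "E (one R) = one R" using separable unfolding strongly_separable_def by blast
lemma r_closed[simp, intro]: "i < n \<Longrightarrow> r i \<in> carr R" using separable unfolding strongly_separable_def by blast
lemma s_closed[simp, intro]: "i < n \<Longrightarrow> s i \<in> carr R" using separable unfolding strongly_separable_def by blast
lemma dual_basis_expand1: "m \<in> carr R \<Longrightarrow> fsum R (\<lambda>i. mul R (E (mul R m (r i))) (s i)) {..<n} = m"
  using separable unfolding strongly_separable_def by blast
lemma dual_basis_expand2: "m \<in> carr R \<Longrightarrow> fsum R (\<lambda>i. mul R (r i) (E (mul R (s i) m))) {..<n} = m"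
  using separable unfolding strongly_separable_def by blast
lemma lam_nonzero: "lam \<noteq> 0" using separable unfolding strongly_separable_def by blast
lemma sum_r_s: "fsum R (\<lambda>i. mul R (r i) (s i)) {..<n} = smul R (inverse lam) (one R)"
  using separable unfolding strongly_separable_def by blast

abbreviation R1 where "R1 \<equiv> bc_alg R S E n r s"
abbreviation cls where "cls \<equiv> tclass R S"
abbreviation tunit where "tunit \<equiv> (\<Sum>i<n. tgen (r i) (s i))"

lemma tunit_tfree[simp, intro]: "tunit \<in> TF"
  by (intro tfree_sum tfree_tgen) simp_all

lemma R1_carr: "carr R1 = cls ` TF" unfolding bc_alg_def by simp
lemma R1_zero: "zero R1 = cls 0" unfolding bc_alg_def by simp
lemma R1_one: "one R1 = cls tunit" unfolding bc_alg_def by simp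

lemma cls_in[simp, intro]: "v \<in> TF \<Longrightarrow> cls v \<in> carr R1"
  unfolding R1_carr by (rule imageI)

lemma carr_R1E: "X \<in> carr R1 \<Longrightarrow> (\<And>v. v \<in> TF \<Longrightarrow> X = cls v \<Longrightarrow> P) \<Longrightarrow> P"
  unfolding R1_carr by blast

lemma cls_eq_iff: "cls v = cls w \<longleftrightarrow> v - w \<in> TR" by (rule tclass_eq)

lemma cls_eqI: "v - w \<in> TR \<Longrightarrow> cls v = cls w" using tclass_eq by blast

lemma trep_cls: obtains t where "trep (cls v) = v + t" "t \<in> TR"
proof -
  have "trep (cls v) - v \<in> TR" by (rule trep_tclass)
  then show ?thesis using that[of "trep (cls v) - v"] by simp
qed

lemma R1_add: "add R1 (cls v) (cls w) = cls (v + w)"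
proof -
  obtain t1 where t1: "trep (cls v) = v + t1" "t1 \<in> TR" by (rule trep_cls)
  obtain t2 where t2: "trep (cls w) = w + t2" "t2 \<in> TR" by (rule trep_cls)
  have "add R1 (cls v) (cls w) = cls (trep (cls v) + trep (cls w))" unfolding bc_alg_def by simp
  also have "\<dots> = cls (v + w)"
    by (rule cls_eqI) (use t1 t2 trel.trel_add[OF t1(2) t2(2)] in \<open>simp add: algebra_simps\<close>)
  finally show ?thesis .
qed

lemma R1_smul: "smul R1 c (cls v) = cls (tscale c v)"
proof -
  obtain t1 where t1: "trep (cls v) = v + t1" "t1 \<in> TR" by (rule trep_cls)
  have "smul R1 c (cls v) = cls (tscale c (trep (cls v)))" unfolding bc_alg_def by simp
  also have "\<dots> = cls (tscale c v)"
    by (rule cls_eqI) (use t1 trel.trel_scale[OF t1(2), of c] in \<open>simp add: tscale_add\<close>)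
  finally show ?thesis .
qed

lemma R1_mul: "v \<in> TF \<Longrightarrow> w \<in> TF \<Longrightarrow> mul R1 (cls v) (cls w) = cls (tmul_raw R E v w)"
proof -
  assume v: "v \<in> TF" and w: "w \<in> TF"
  obtain t1 where t1: "trep (cls v) = v + t1" "t1 \<in> TR" by (rule trep_cls)
  obtain t2 where t2: "trep (cls w) = w + t2" "t2 \<in> TR" by (rule trep_cls)
  have x1: "tmul_raw R E t1 w \<in> TR" using t1 w by (intro tmul_trel_left)
  have x2: "tmul_raw R E v t2 \<in> TR" using t2 v by (intro tmul_trel_right)
  have x3: "tmul_raw R E t1 t2 \<in> TR" using t1 t2 trel_tfree by (intro tmul_trel_left) simp_all
  have "mul R1 (cls v) (cls w) = cls (tmul_raw R E (trep (cls v)) (trep (cls w)))" unfolding bc_alg_def by simp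
  also have "tmul_raw R E (trep (cls v)) (trep (cls w)) =
      tmul_raw R E v w + (tmul_raw R E t1 w + tmul_raw R E v t2 + tmul_raw R E t1 t2)"
    unfolding t1 t2 by (simp add: tmul_add_left tmul_add_right algebra_simps)
  also have "cls \<dots> = cls (tmul_raw R E v w)"
    by (rule cls_eqI) (simp add: x1 x2 x3 trel.trel_add)
  finally show ?thesis .
qed

lemma tmul_assoc_tgen: "a \<in> carr R \<Longrightarrow> b \<in> carr R \<Longrightarrow> c \<in> carr R \<Longrightarrow> d \<in> carr R \<Longrightarrow> e \<in> carr R \<Longrightarrow> f \<in> carr R \<Longrightarrow>
  tmul_raw R E (tmul_raw R E (tgen a b) (tgen c d)) (tgen e f) = tmul_raw R E (tgen a b) (tmul_raw R E (tgen c d) (tgen e f))"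
proof -
  assume c: "a \<in> carr R" "b \<in> carr R" "c \<in> carr R" "d \<in> carr R" "e \<in> carr R" "f \<in> carr R"
  have "mul R a (E (mul R b (mul R c (E (mul R d e))))) = mul R (mul R a (E (mul R b c))) (E (mul R d e))"
    using c by (simp add: mul_assoc[symmetric] E_right)
  then show ?thesis by (simp add: tmul_tgen)
qed

lemma tmul_assoc: "v \<in> TF \<Longrightarrow> w \<in> TF \<Longrightarrow> u \<in> TF \<Longrightarrow>
   tmul_raw R E (tmul_raw R E v w) u = tmul_raw R E v (tmul_raw R E w u)"
proof -
  have step3: "\<And>c d e f. c \<in> carr R \<Longrightarrow> d \<in> carr R \<Longrightarrow> e \<in> carr R \<Longrightarrow> f \<in> carr R \<Longrightarrow> v \<in> TF \<Longrightarrow>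
     tmul_raw R E (tmul_raw R E v (tgen c d)) (tgen e f) = tmul_raw R E v (tmul_raw R E (tgen c d) (tgen e f))" for v
    by (rule linear_eq_on_tfree[where F="\<lambda>v. tmul_raw R E (tmul_raw R E v (tgen _ _)) (tgen _ _)"])
       (simp_all add: tmul_add_left tmul_scale_left tmul_assoc_tgen)
  have step2: "\<And>e f. e \<in> carr R \<Longrightarrow> f \<in> carr R \<Longrightarrow> v \<in> TF \<Longrightarrow> w \<in> TF \<Longrightarrow>
     tmul_raw R E (tmul_raw R E v w) (tgen e f) = tmul_raw R E v (tmul_raw R E w (tgen e f))" for v w
    by (rule linear_eq_on_tfree[where F="\<lambda>w. tmul_raw R E (tmul_raw R E v w) (tgen _ _)"])
       (simp_all add: tmul_add_left tmul_scale_left tmul_add_right tmul_scale_right step3)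
  show "v \<in> TF \<Longrightarrow> w \<in> TF \<Longrightarrow> u \<in> TF \<Longrightarrow>
     tmul_raw R E (tmul_raw R E v w) u = tmul_raw R E v (tmul_raw R E w u)"
    by (rule linear_eq_on_tfree[where F="\<lambda>u. tmul_raw R E (tmul_raw R E v w) u"])
       (simp_all add: tmul_add_right tmul_scale_right step2)
qed

lemma tmul_tunit_left: "v \<in> TF \<Longrightarrow> tmul_raw R E tunit v - v \<in> TR"
proof (rule linear_mod_trel_eqI[where F="tmul_raw R E tunit" and G="\<lambda>v. v"])
  show "linear_mod_trel (tmul_raw R E tunit)" by (rule linear_imp_linear_mod_trel) (simp_all add: tmul_add_right tmul_scale_right)
  show "linear_mod_trel (\<lambda>v. v)" by (rule linear_imp_linear_mod_trel) simp_all
next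
  fix a b assume ab: "a \<in> carr R" "b \<in> carr R"
  have e: "tmul_raw R E tunit (tgen a b) = (\<Sum>i<n. tgen (mul R (r i) (E (mul R (s i) a))) b)"
    by (simp add: tmul_sum_left tmul_tgen)
  have "tgen (fsum R (\<lambda>i. mul R (r i) (E (mul R (s i) a))) {..<n}) b
      - (\<Sum>i<n. tgen (mul R (r i) (E (mul R (s i) a))) b) \<in> TR"
    using ab by (intro tgen_fsum_left) simp_all
  then have "tgen a b - (\<Sum>i<n. tgen (mul R (r i) (E (mul R (s i) a))) b) \<in> TR"
    using dual_basis_expand2[OF ab(1)] by simp
  then show "tmul_raw R E tunit (tgen a b) - tgen a b \<in> TR" unfolding e by (rule trel_sym)
qed

lemma tmul_tunit_right: "v \<in> TF \<Longrightarrow> tmul_raw R E v tunit - v \<in> TR"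
proof (rule linear_mod_trel_eqI[where F="\<lambda>v. tmul_raw R E v tunit" and G="\<lambda>v. v"])
  show "linear_mod_trel (\<lambda>v. tmul_raw R E v tunit)" by (rule linear_imp_linear_mod_trel) (simp_all add: tmul_add_left tmul_scale_left)
  show "linear_mod_trel (\<lambda>v. v)" by (rule linear_imp_linear_mod_trel) simp_all
next
  fix a b assume ab: "a \<in> carr R" "b \<in> carr R"
  let ?x = "\<lambda>i. E (mul R b (r i))"
  have e: "tmul_raw R E (tgen a b) tunit = (\<Sum>i<n. tgen (mul R a (?x i)) (s i))"
    by (simp add: tmul_sum_right tmul_tgen)
  have t1: "(\<Sum>i<n. tgen (mul R a (?x i)) (s i)) - (\<Sum>i<n. tgen a (mul R (?x i) (s i))) \<in> TR"
    unfolding sum_subtractf[symmetric] using ab by (intro trel_sum trel.trel_bal) simp_all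
  have "tgen a (fsum R (\<lambda>i. mul R (?x i) (s i)) {..<n}) - (\<Sum>i<n. tgen a (mul R (?x i) (s i))) \<in> TR"
    using ab by (intro tgen_fsum_right) simp_all
  then have t2: "tgen a b - (\<Sum>i<n. tgen a (mul R (?x i) (s i))) \<in> TR"
    using dual_basis_expand1[OF ab(2)] by simp
  have "(\<Sum>i<n. tgen (mul R a (?x i)) (s i)) - tgen a b \<in> TR"
    using trel_trans[OF t1 trel_sym[OF t2]] .
  then show "tmul_raw R E (tgen a b) tunit - tgen a b \<in> TR" unfolding e .
qed

lemma R1_kalgebra: "kalgebra R1"
  unfolding kalgebra_def
proof (intro conjI)
  show "zero R1 \<in> carr R1" unfolding R1_zero by simp
  show "one R1 \<in> carr R1" unfolding R1_one by simp
  show "\<forall>x\<in>carr R1. \<forall>y\<in>carr R1. add R1 x y \<in> carr R1 \<and> mul R1 x y \<in> carr R1"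
    by (auto elim!: carr_R1E simp: R1_add R1_mul tfree_add tmul_tfree)
  show "\<forall>c. \<forall>x\<in>carr R1. smul R1 c x \<in> carr R1"
    by (auto elim!: carr_R1E simp: R1_smul tfree_tscale)
  show "\<forall>x\<in>carr R1. \<forall>y\<in>carr R1. \<forall>z\<in>carr R1.
          add R1 (add R1 x y) z = add R1 x (add R1 y z) \<and>
          mul R1 (mul R1 x y) z = mul R1 x (mul R1 y z) \<and>
          mul R1 x (add R1 y z) = add R1 (mul R1 x y) (mul R1 x z) \<and>
          mul R1 (add R1 x y) z = add R1 (mul R1 x z) (mul R1 y z)"
    by (auto elim!: carr_R1E simp: R1_add R1_mul tfree_add tmul_tfree tmul_assoc
        tmul_add_left tmul_add_right add.assoc)
  show "\<forall>x\<in>carr R1. \<forall>y\<in>carr R1. add R1 x y = add R1 y x"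
    by (auto elim!: carr_R1E simp: R1_add add.commute)
  show "\<forall>x\<in>carr R1. add R1 x (zero R1) = x \<and> add R1 x (smul R1 (-1) x) = zero R1 \<and>
          mul R1 (one R1) x = x \<and> mul R1 x (one R1) = x \<and> smul R1 1 x = x"
    by (intro ballI, elim carr_R1E)
       (simp add: R1_zero R1_one R1_add R1_smul R1_mul cls_eq_iff tscale_neg1
        tmul_tunit_left tmul_tunit_right trel.trel_zero)
  show "\<forall>a b. \<forall>x\<in>carr R1. smul R1 (a * b) x = smul R1 a (smul R1 b x) \<and>
          smul R1 (a + b) x = add R1 (smul R1 a x) (smul R1 b x)"
    by (auto elim!: carr_R1E simp: R1_smul R1_add tscale_add_scalar)
  show "\<forall>a. \<forall>x\<in>carr R1. \<forall>y\<in>carr R1. smul R1 a (add R1 x y) = add R1 (smul R1 a x) (smul R1 a y) \<and>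
          smul R1 a (mul R1 x y) = mul R1 (smul R1 a x) y \<and>
          smul R1 a (mul R1 x y) = mul R1 x (smul R1 a y)"
    by (auto elim!: carr_R1E simp: R1_smul R1_add R1_mul tscale_add tmul_scale_left tmul_scale_right tfree_tscale)
qed

sublocale R1: k_algebra R1 by (unfold_locales) (rule R1_kalgebra)

abbreviation gen where "gen a b \<equiv> cls (tgen a b)"
abbreviation emb where "emb \<equiv> bc_emb R S n r s"
abbreviation E1 where "E1 \<equiv> bc_E R lam"

lemma gen_closed[simp, intro]: "a \<in> carr R \<Longrightarrow> b \<in> carr R \<Longrightarrow> gen a b \<in> carr R1"
  by (intro cls_in tfree_tgen)

lemma cls_sum: "(\<And>i. i \<in> I \<Longrightarrow> f i \<in> TF) \<Longrightarrow> cls (sum f I) = fsum R1 (\<lambda>i. cls (f i)) I"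
proof (induction I rule: infinite_finite_induct)
  case (infinite A) then show ?case by (simp add: R1_zero)
next
  case empty then show ?case by (simp add: R1_zero)
next
  case (insert x F)
  have "cls (sum f (insert x F)) = cls (f x + sum f F)" using insert by simp
  also have "\<dots> = add R1 (cls (f x)) (cls (sum f F))" by (simp add: R1_add)
  also have "\<dots> = add R1 (cls (f x)) (fsum R1 (\<lambda>i. cls (f i)) F)" using insert by simp
  also have "\<dots> = fsum R1 (\<lambda>i. cls (f i)) (insert x F)"
    using insert by (intro R1.fsum_insert[symmetric]) auto
  finally show ?case .
qed

lemma R1_induct[consumes 1, case_names zero gen add smul]:
  assumes X: "X \<in> carr R1"
    and z: "P (zero R1)"
    and g: "\<And>a b. a \<in> carr R \<Longrightarrow> b \<in> carr R \<Longrightarrow> P (gen a b)"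
    and a: "\<And>X Y. X \<in> carr R1 \<Longrightarrow> Y \<in> carr R1 \<Longrightarrow> P X \<Longrightarrow> P Y \<Longrightarrow> P (add R1 X Y)"
    and sm: "\<And>c X. X \<in> carr R1 \<Longrightarrow> P X \<Longrightarrow> P (smul R1 c X)"
  shows "P X"
proof -
  obtain v where v: "v \<in> TF" "X = cls v" using X by (rule carr_R1E)
  from v(1) have "P (cls v)"
  proof (induction rule: tfree_induct)
    case zero
    then show ?case using z by (simp add: R1_zero)
  next
    case (add_tgen a b c w)
    then have "P (add R1 (smul R1 c (gen a b)) (cls w))" by (intro a sm g) auto
    then show ?case by (simp add: R1_smul R1_add)
  qed
  then show ?thesis using v(2) by simp
qed

lemma gen_mul: "a \<in> carr R \<Longrightarrow> b \<in> carr R \<Longrightarrow> c \<in> carr R \<Longrightarrow> d \<in> carr R \<Longrightarrow>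
  mul R1 (gen a b) (gen c d) = gen (mul R a (E (mul R b c))) d"
  by (simp add: R1_mul tfree_tgen tmul_tgen)

lemma gen_addl: "a \<in> carr R \<Longrightarrow> a' \<in> carr R \<Longrightarrow> b \<in> carr R \<Longrightarrow>
  gen (add R a a') b = add R1 (gen a b) (gen a' b)"
  unfolding R1_add by (rule cls_eqI) (use trel.trel_addl[of a R a' b S] in \<open>simp add: algebra_simps\<close>)

lemma gen_smull: "a \<in> carr R \<Longrightarrow> b \<in> carr R \<Longrightarrow> gen (smul R c a) b = smul R1 c (gen a b)"
  unfolding R1_smul by (rule cls_eqI) (rule trel.trel_smull)

lemma gen_smulr: "a \<in> carr R \<Longrightarrow> b \<in> carr R \<Longrightarrow> gen a (smul R c b) = smul R1 c (gen a b)"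
  unfolding R1_smul by (rule cls_eqI) (rule trel.trel_smulr)

lemma gen_bal: "a \<in> carr R \<Longrightarrow> b \<in> carr R \<Longrightarrow> x \<in> S \<Longrightarrow> gen (mul R a x) b = gen a (mul R x b)"
  by (rule cls_eqI) (rule trel.trel_bal)

lemma gen_fsum_left: "finite I \<Longrightarrow> \<forall>i\<in>I. f i \<in> carr R \<Longrightarrow> b \<in> carr R \<Longrightarrow>
  gen (fsum R f I) b = fsum R1 (\<lambda>i. gen (f i) b) I"
proof -
  assume a: "finite I" "\<forall>i\<in>I. f i \<in> carr R" "b \<in> carr R"
  have "gen (fsum R f I) b = cls (\<Sum>i\<in>I. tgen (f i) b)"
    by (rule cls_eqI) (rule tgen_fsum_left[OF a])
  also have "\<dots> = fsum R1 (\<lambda>i. gen (f i) b) I" using a by (intro cls_sum tfree_tgen) simp_all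
  finally show ?thesis .
qed

lemma gen_fsum_right: "finite I \<Longrightarrow> \<forall>i\<in>I. f i \<in> carr R \<Longrightarrow> a \<in> carr R \<Longrightarrow>
  gen a (fsum R f I) = fsum R1 (\<lambda>i. gen a (f i)) I"
proof -
  assume a: "finite I" "\<forall>i\<in>I. f i \<in> carr R" "a \<in> carr R"
  have "gen a (fsum R f I) = cls (\<Sum>i\<in>I. tgen a (f i))"
    by (rule cls_eqI) (rule tgen_fsum_right[OF a])
  also have "\<dots> = fsum R1 (\<lambda>i. gen a (f i)) I" using a by (intro cls_sum tfree_tgen) simp_all
  finally show ?thesis .
qed

lemma one_R1_gen: "one R1 = fsum R1 (\<lambda>i. gen (r i) (s i)) {..<n}"
  unfolding R1_one by (rule cls_sum) (simp add: tfree_tgen)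

lemma emb_eq_fsum: "x \<in> carr R \<Longrightarrow> emb x = fsum R1 (\<lambda>i. gen (mul R x (r i)) (s i)) {..<n}"
  unfolding bc_emb_def by (rule cls_sum) (simp add: tfree_tgen)

lemma emb_closed[simp, intro]: "x \<in> carr R \<Longrightarrow> emb x \<in> carr R1"
  by (subst emb_eq_fsum) (simp_all add: R1.fsum_closed)

lemma mul_emb_gen: "x \<in> carr R \<Longrightarrow> a \<in> carr R \<Longrightarrow> b \<in> carr R \<Longrightarrow> mul R1 (emb x) (gen a b) = gen (mul R x a) b"
proof -
  assume c: "x \<in> carr R" "a \<in> carr R" "b \<in> carr R"
  have "mul R1 (emb x) (gen a b) = fsum R1 (\<lambda>i. mul R1 (gen (mul R x (r i)) (s i)) (gen a b)) {..<n}"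
    unfolding emb_eq_fsum[OF c(1)] using c by (intro R1.fsum_mul_right[symmetric]) simp_all
  also have "\<dots> = fsum R1 (\<lambda>i. gen (mul R x (mul R (r i) (E (mul R (s i) a)))) b) {..<n}"
    using c by (intro R1.fsum_cong) (simp add: gen_mul mul_assoc)
  also have "\<dots> = gen (fsum R (\<lambda>i. mul R x (mul R (r i) (E (mul R (s i) a)))) {..<n}) b"
    using c by (intro gen_fsum_left[symmetric]) simp_all
  also have "fsum R (\<lambda>i. mul R x (mul R (r i) (E (mul R (s i) a)))) {..<n} = mul R x a"
    using c by (simp add: fsum_mul_left dual_basis_expand2)
  finally show ?thesis .
qed

lemma mul_gen_emb: "x \<in> carr R \<Longrightarrow> a \<in> carr R \<Longrightarrow> b \<in> carr R \<Longrightarrow> mul R1 (gen a b) (emb x) = gen a (mul R b x)"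
proof -
  assume c: "x \<in> carr R" "a \<in> carr R" "b \<in> carr R"
  have "mul R1 (gen a b) (emb x) = fsum R1 (\<lambda>i. mul R1 (gen a b) (gen (mul R x (r i)) (s i))) {..<n}"
    unfolding emb_eq_fsum[OF c(1)] using c by (intro R1.fsum_mul_left[symmetric]) simp_all
  also have "\<dots> = fsum R1 (\<lambda>i. gen a (mul R (E (mul R (mul R b x) (r i))) (s i))) {..<n}"
    using c by (intro R1.fsum_cong) (simp add: gen_mul mul_assoc gen_bal)
  also have "\<dots> = gen a (fsum R (\<lambda>i. mul R (E (mul R (mul R b x) (r i))) (s i)) {..<n})"
    using c by (intro gen_fsum_right[symmetric]) simp_all
  also have "fsum R (\<lambda>i. mul R (E (mul R (mul R b x) (r i))) (s i)) {..<n} = mul R b x"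
    using c by (simp add: dual_basis_expand1)
  finally show ?thesis .
qed


definition contract_E where "contract_E X = lin_ext R pair_mul_E (trep X)"

lemma lin_ext_trep:
  assumes gc: "\<And>a b. a \<in> carr R \<Longrightarrow> b \<in> carr R \<Longrightarrow> g (a, b) \<in> carr R"
    and gt: "\<And>t. t \<in> TR \<Longrightarrow> lin_ext R g t = zero R"
    and v: "v \<in> TF"
  shows "lin_ext R g (trep (cls v)) = lin_ext R g v"
proof -
  obtain t where t: "trep (cls v) = v + t" "t \<in> TR" by (rule trep_cls)
  then have "lin_ext R g (trep (cls v)) = add R (lin_ext R g v) (lin_ext R g t)"
    using v trel_tfree by (simp add: lin_ext_add[where g=g, OF gc])
  then show ?thesis using gt[OF t(2)] lin_ext_closed[where g=g, OF gc v] by simp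
qed

lemma E1_cls: "v \<in> TF \<Longrightarrow> E1 (cls v) = smul R lam (lin_ext R pair_mul v)"
proof -
  assume v: "v \<in> TF"
  have "E1 (cls v) = smul R lam (lin_ext R pair_mul (trep (cls v)))"
    unfolding bc_E_def lin_ext_def pair_mul_def by simp
  then show ?thesis using lin_ext_trep[where g=pair_mul, OF pair_mul_closed lin_ext_pair_mul_trel v] by simp
qed

lemma contract_E_cls: "v \<in> TF \<Longrightarrow> contract_E (cls v) = lin_ext R pair_mul_E v"
  unfolding contract_E_def by (rule lin_ext_trep[where g=pair_mul_E, OF pair_mul_E_closed lin_ext_pair_mul_E_trel])

lemma E1_closed[simp, intro]: "X \<in> carr R1 \<Longrightarrow> E1 X \<in> carr R"
  by (erule carr_R1E) (simp add: E1_cls lin_ext_closed[where g=pair_mul, OF pair_mul_closed])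

lemma contract_E_closed[simp, intro]: "X \<in> carr R1 \<Longrightarrow> contract_E X \<in> carr R"
  by (erule carr_R1E) (simp add: contract_E_cls lin_ext_closed[where g=pair_mul_E, OF pair_mul_E_closed])

lemma E1_add: "X \<in> carr R1 \<Longrightarrow> Y \<in> carr R1 \<Longrightarrow> E1 (add R1 X Y) = add R (E1 X) (E1 Y)"
  by (erule carr_R1E, erule carr_R1E)
     (simp add: R1_add E1_cls lin_ext_add[where g=pair_mul, OF pair_mul_closed] smul_add
       lin_ext_closed[where g=pair_mul, OF pair_mul_closed] tfree_add)

lemma contract_E_add: "X \<in> carr R1 \<Longrightarrow> Y \<in> carr R1 \<Longrightarrow> contract_E (add R1 X Y) = add R (contract_E X) (contract_E Y)"
  by (erule carr_R1E, erule carr_R1E)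
     (simp add: R1_add contract_E_cls lin_ext_add[where g=pair_mul_E, OF pair_mul_E_closed] tfree_add)

lemma E1_smul: "X \<in> carr R1 \<Longrightarrow> E1 (smul R1 c X) = smul R c (E1 X)"
  by (erule carr_R1E)
     (simp add: R1_smul E1_cls lin_ext_tscale[where g=pair_mul, OF pair_mul_closed]
       lin_ext_closed[where g=pair_mul, OF pair_mul_closed] tfree_tscale mult.commute)

lemma contract_E_smul: "X \<in> carr R1 \<Longrightarrow> contract_E (smul R1 c X) = smul R c (contract_E X)"
  by (erule carr_R1E) (simp add: R1_smul contract_E_cls lin_ext_tscale[where g=pair_mul_E, OF pair_mul_E_closed] tfree_tscale)

lemma E1_zero[simp]: "E1 (zero R1) = zero R"
  by (simp add: R1_zero E1_cls)

lemma contract_E_zero[simp]: "contract_E (zero R1) = zero R"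
  by (simp add: R1_zero contract_E_cls)

lemma E1_gen: "a \<in> carr R \<Longrightarrow> b \<in> carr R \<Longrightarrow> E1 (gen a b) = smul R lam (mul R a b)"
  by (simp add: E1_cls tfree_tgen lin_ext_tgen[where g=pair_mul, OF pair_mul_closed] pair_mul_def)

lemma contract_E_gen: "a \<in> carr R \<Longrightarrow> b \<in> carr R \<Longrightarrow> contract_E (gen a b) = mul R a (E b)"
  by (simp add: contract_E_cls tfree_tgen lin_ext_tgen[where g=pair_mul_E, OF pair_mul_E_closed] pair_mul_E_def)

lemma E1_fsum: "\<forall>i\<in>I. f i \<in> carr R1 \<Longrightarrow> E1 (fsum R1 f I) = fsum R (\<lambda>i. E1 (f i)) I"
  by (rule fsum_hom) (simp_all add: R1.k_algebra_axioms k_algebra_axioms E1_add)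

lemma E1_one[simp]: "E1 (one R1) = one R"
proof -
  have "E1 (one R1) = fsum R (\<lambda>i. E1 (gen (r i) (s i))) {..<n}"
    unfolding one_R1_gen by (rule E1_fsum) simp
  also have "\<dots> = fsum R (\<lambda>i. smul R lam (mul R (r i) (s i))) {..<n}"
    by (intro fsum_cong) (simp add: E1_gen)
  also have "\<dots> = smul R lam (fsum R (\<lambda>i. mul R (r i) (s i)) {..<n})"
    by (intro fsum_smul) simp
  also have "\<dots> = one R" using lam_nonzero by (simp add: sum_r_s)
  finally show ?thesis .
qed

lemma emb_mul: "x \<in> carr R \<Longrightarrow> y \<in> carr R \<Longrightarrow> emb (mul R x y) = mul R1 (emb x) (emb y)"
proof -
  assume xy: "x \<in> carr R" "y \<in> carr R"
  have "mul R1 (emb x) (emb y) = fsum R1 (\<lambda>i. mul R1 (emb x) (gen (mul R y (r i)) (s i))) {..<n}"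
    unfolding emb_eq_fsum[OF xy(2)] using xy by (intro R1.fsum_mul_left[symmetric]) simp_all
  also have "\<dots> = fsum R1 (\<lambda>i. gen (mul R (mul R x y) (r i)) (s i)) {..<n}"
    using xy by (intro R1.fsum_cong) (simp add: mul_emb_gen mul_assoc)
  also have "\<dots> = emb (mul R x y)" using xy by (simp add: emb_eq_fsum)
  finally show ?thesis by simp
qed

lemma emb_add: "x \<in> carr R \<Longrightarrow> y \<in> carr R \<Longrightarrow> emb (add R x y) = add R1 (emb x) (emb y)"
proof -
  assume xy: "x \<in> carr R" "y \<in> carr R"
  have "emb (add R x y) = fsum R1 (\<lambda>i. add R1 (gen (mul R x (r i)) (s i)) (gen (mul R y (r i)) (s i))) {..<n}"
    unfolding emb_eq_fsum[OF closed(3)[OF xy]] using xy by (intro R1.fsum_cong) (simp add: distr gen_addl)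
  also have "\<dots> = add R1 (emb x) (emb y)"
    using xy by (simp add: emb_eq_fsum R1.fsum_add)
  finally show ?thesis .
qed

lemma emb_smul: "x \<in> carr R \<Longrightarrow> emb (smul R c x) = smul R1 c (emb x)"
proof -
  assume x: "x \<in> carr R"
  have "emb (smul R c x) = fsum R1 (\<lambda>i. smul R1 c (gen (mul R x (r i)) (s i))) {..<n}"
    unfolding emb_eq_fsum[OF closed(5)[OF x]] using x by (intro R1.fsum_cong) (simp add: gen_smull[symmetric])
  also have "\<dots> = smul R1 c (emb x)"
    using x by (simp add: emb_eq_fsum R1.fsum_smul)
  finally show ?thesis .
qed

lemma emb_one[simp]: "emb (one R) = one R1"
  unfolding emb_eq_fsum[OF closed(2)] one_R1_gen by (intro R1.fsum_cong) simp

lemma emb_zero[simp]: "emb (zero R) = zero R1"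
proof -
  have "emb (zero R) = emb (smul R 0 (one R))" by simp
  also have "\<dots> = zero R1" by (simp only: emb_smul closed) simp
  finally show ?thesis .
qed

lemma E1_emb_left: "x \<in> carr R \<Longrightarrow> Y \<in> carr R1 \<Longrightarrow> E1 (mul R1 (emb x) Y) = mul R x (E1 Y)"
proof -
  assume x: "x \<in> carr R" and Y: "Y \<in> carr R1"
  from Y show ?thesis
  proof (induction rule: R1_induct)
    case zero then show ?case using x by simp
  next
    case (gen a b) then show ?case using x by (simp add: mul_emb_gen E1_gen mul_assoc)
  next
    case (add X Y) then show ?case using x by (simp add: R1.distl E1_add distl)
  next
    case (smul c X) then show ?case using x by (simp add: E1_smul)
  qed
qed

lemma E1_emb_right: "x \<in> carr R \<Longrightarrow> Y \<in> carr R1 \<Longrightarrow> E1 (mul R1 Y (emb x)) = mul R (E1 Y) x"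
proof -
  assume x: "x \<in> carr R" and Y: "Y \<in> carr R1"
  from Y show ?thesis
  proof (induction rule: R1_induct)
    case zero then show ?case using x by simp
  next
    case (gen a b) then show ?case using x by (simp add: mul_gen_emb E1_gen mul_assoc)
  next
    case (add X Y) then show ?case using x by (simp add: R1.distr E1_add distr)
  next
    case (smul c X) then show ?case using x by (simp add: E1_smul)
  qed
qed

abbreviation r1 where "r1 \<equiv> bc_r R S lam r"
abbreviation s1 where "s1 \<equiv> bc_s R S s"

lemma r1_eq: "r1 i = smul R1 (inverse lam) (gen (r i) (one R))"
  by (simp add: bc_r_def R1_smul)

lemma s1_eq: "s1 i = gen (one R) (s i)"
  by (simp add: bc_s_def)

lemma r1_closed[simp, intro]: "i < n \<Longrightarrow> r1 i \<in> carr R1" by (simp add: r1_eq)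
lemma s1_closed[simp, intro]: "i < n \<Longrightarrow> s1 i \<in> carr R1" by (simp add: s1_eq)

lemma gen_zero_left[simp]: "b \<in> carr R \<Longrightarrow> gen (zero R) b = zero R1"
  unfolding R1_zero by (rule cls_eqI) (simp add: tgen_zero_left)

definition dual_term1 where "dual_term1 X i = mul R1 (emb (E1 (mul R1 X (r1 i)))) (s1 i)"
definition dual_term2 where "dual_term2 X i = mul R1 (r1 i) (emb (E1 (mul R1 (s1 i) X)))"

lemma dual_term1_closed: "X \<in> carr R1 \<Longrightarrow> i < n \<Longrightarrow> dual_term1 X i \<in> carr R1" unfolding dual_term1_def by simp
lemma dual_term2_closed: "X \<in> carr R1 \<Longrightarrow> i < n \<Longrightarrow> dual_term2 X i \<in> carr R1" unfolding dual_term2_def by simp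

lemma dual_term1_add: "X \<in> carr R1 \<Longrightarrow> Y \<in> carr R1 \<Longrightarrow> i < n \<Longrightarrow> dual_term1 (add R1 X Y) i = add R1 (dual_term1 X i) (dual_term1 Y i)"
  unfolding dual_term1_def by (simp add: R1.distr E1_add emb_add)

lemma dual_term2_add: "X \<in> carr R1 \<Longrightarrow> Y \<in> carr R1 \<Longrightarrow> i < n \<Longrightarrow> dual_term2 (add R1 X Y) i = add R1 (dual_term2 X i) (dual_term2 Y i)"
  unfolding dual_term2_def by (simp add: R1.distl E1_add emb_add)

lemma dual_term1_smul: "X \<in> carr R1 \<Longrightarrow> i < n \<Longrightarrow> dual_term1 (smul R1 c X) i = smul R1 c (dual_term1 X i)"
  unfolding dual_term1_def by (simp add: E1_smul emb_smul)

lemma dual_term2_smul: "X \<in> carr R1 \<Longrightarrow> i < n \<Longrightarrow> dual_term2 (smul R1 c X) i = smul R1 c (dual_term2 X i)"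
  unfolding dual_term2_def by (simp add: E1_smul emb_smul)

lemma dual_term1_zero: "i < n \<Longrightarrow> dual_term1 (zero R1) i = zero R1"
  unfolding dual_term1_def by simp

lemma dual_term2_zero: "i < n \<Longrightarrow> dual_term2 (zero R1) i = zero R1"
  unfolding dual_term2_def by simp

lemma dual_term1_gen: "a \<in> carr R \<Longrightarrow> b \<in> carr R \<Longrightarrow> i < n \<Longrightarrow> dual_term1 (gen a b) i = gen a (mul R (E (mul R b (r i))) (s i))"
proof -
  assume c: "a \<in> carr R" "b \<in> carr R" "i < n"
  let ?y = "mul R a (E (mul R b (r i)))"
  have y: "?y \<in> carr R" using c by simp
  have "mul R1 (gen a b) (r1 i) = smul R1 (inverse lam) (gen ?y (one R))"
    unfolding r1_eq using c by (simp add: gen_mul)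
  then have "E1 (mul R1 (gen a b) (r1 i)) = ?y"
    using c y lam_nonzero by (simp add: E1_smul E1_gen)
  then have "dual_term1 (gen a b) i = mul R1 (emb ?y) (gen (one R) (s i))" unfolding dual_term1_def s1_eq by simp
  also have "\<dots> = gen ?y (s i)" using c y by (simp add: mul_emb_gen)
  also have "\<dots> = gen a (mul R (E (mul R b (r i))) (s i))" using c by (simp add: gen_bal)
  finally show ?thesis .
qed

lemma dual_term2_gen: "a \<in> carr R \<Longrightarrow> b \<in> carr R \<Longrightarrow> i < n \<Longrightarrow> dual_term2 (gen a b) i = gen (mul R (r i) (E (mul R (s i) a))) b"
proof -
  assume c: "a \<in> carr R" "b \<in> carr R" "i < n"
  let ?y = "mul R (E (mul R (s i) a)) b"
  have y: "?y \<in> carr R" using c by simp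
  have "mul R1 (s1 i) (gen a b) = gen (E (mul R (s i) a)) b"
    unfolding s1_eq using c by (simp add: gen_mul)
  then have "E1 (mul R1 (s1 i) (gen a b)) = smul R lam ?y"
    using c by (simp add: E1_gen)
  then have "dual_term2 (gen a b) i = mul R1 (r1 i) (emb (smul R lam ?y))" unfolding dual_term2_def by simp
  also have "\<dots> = smul R1 (inverse lam) (gen (r i) (smul R lam ?y))"
    unfolding r1_eq using c y by (simp add: mul_gen_emb)
  also have "\<dots> = gen (r i) ?y" using c y lam_nonzero by (simp add: gen_smulr)
  also have "\<dots> = gen (mul R (r i) (E (mul R (s i) a))) b" using c by (simp add: gen_bal)
  finally show ?thesis .
qed

lemma R1_dual_basis_expand1: "X \<in> carr R1 \<Longrightarrow> fsum R1 (\<lambda>i. dual_term1 X i) {..<n} = X"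
proof (induction rule: R1_induct)
  case zero then show ?case by (simp add: dual_term1_zero R1.fsum_zero_terms)
next
  case (gen a b)
  have "fsum R1 (\<lambda>i. dual_term1 (gen a b) i) {..<n} = fsum R1 (\<lambda>i. gen a (mul R (E (mul R b (r i))) (s i))) {..<n}"
    using gen by (intro R1.fsum_cong) (simp add: dual_term1_gen)
  also have "\<dots> = gen a (fsum R (\<lambda>i. mul R (E (mul R b (r i))) (s i)) {..<n})"
    using gen by (intro gen_fsum_right[symmetric]) simp_all
  also have "\<dots> = gen a b" using gen by (simp add: dual_basis_expand1)
  finally show ?case .
next
  case (add X Y)
  have "fsum R1 (\<lambda>i. dual_term1 (add R1 X Y) i) {..<n} = fsum R1 (\<lambda>i. add R1 (dual_term1 X i) (dual_term1 Y i)) {..<n}"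
    using add by (intro R1.fsum_cong) (simp add: dual_term1_add)
  also have "\<dots> = add R1 X Y" using add by (simp add: R1.fsum_add dual_term1_closed)
  finally show ?case .
next
  case (smul c X)
  have "fsum R1 (\<lambda>i. dual_term1 (smul R1 c X) i) {..<n} = fsum R1 (\<lambda>i. smul R1 c (dual_term1 X i)) {..<n}"
    using smul by (intro R1.fsum_cong) (simp add: dual_term1_smul)
  also have "\<dots> = smul R1 c X" using smul by (simp add: R1.fsum_smul dual_term1_closed)
  finally show ?case .
qed

lemma R1_dual_basis_expand2: "X \<in> carr R1 \<Longrightarrow> fsum R1 (\<lambda>i. dual_term2 X i) {..<n} = X"
proof (induction rule: R1_induct)
  case zero then show ?case by (simp add: dual_term2_zero R1.fsum_zero_terms)
next
  case (gen a b)
  have "fsum R1 (\<lambda>i. dual_term2 (gen a b) i) {..<n} = fsum R1 (\<lambda>i. gen (mul R (r i) (E (mul R (s i) a))) b) {..<n}"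
    using gen by (intro R1.fsum_cong) (simp add: dual_term2_gen)
  also have "\<dots> = gen (fsum R (\<lambda>i. mul R (r i) (E (mul R (s i) a))) {..<n}) b"
    using gen by (intro gen_fsum_left[symmetric]) simp_all
  also have "\<dots> = gen a b" using gen by (simp add: dual_basis_expand2)
  finally show ?case .
next
  case (add X Y)
  have "fsum R1 (\<lambda>i. dual_term2 (add R1 X Y) i) {..<n} = fsum R1 (\<lambda>i. add R1 (dual_term2 X i) (dual_term2 Y i)) {..<n}"
    using add by (intro R1.fsum_cong) (simp add: dual_term2_add)
  also have "\<dots> = add R1 X Y" using add by (simp add: R1.fsum_add dual_term2_closed)
  finally show ?case .
next
  case (smul c X)
  have "fsum R1 (\<lambda>i. dual_term2 (smul R1 c X) i) {..<n} = fsum R1 (\<lambda>i. smul R1 c (dual_term2 X i)) {..<n}"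
    using smul by (intro R1.fsum_cong) (simp add: dual_term2_smul)
  also have "\<dots> = smul R1 c X" using smul by (simp add: R1.fsum_smul dual_term2_closed)
  finally show ?case .
qed

lemma R1_sum_r_s: "fsum R1 (\<lambda>i. mul R1 (r1 i) (s1 i)) {..<n} = smul R1 (inverse lam) (one R1)"
proof -
  have "fsum R1 (\<lambda>i. mul R1 (r1 i) (s1 i)) {..<n} = fsum R1 (\<lambda>i. smul R1 (inverse lam) (gen (r i) (s i))) {..<n}"
    by (intro R1.fsum_cong) (simp add: r1_eq s1_eq gen_mul)
  also have "\<dots> = smul R1 (inverse lam) (one R1)"
    unfolding one_R1_gen by (intro R1.fsum_smul) simp
  finally show ?thesis .
qed

lemma subalgebra_emb: "subalgebra R1 (emb ` carr R)"
  unfolding subalgebra_def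
proof (intro conjI ballI allI)
  show "emb ` carr R \<subseteq> carr R1" by auto
  show "one R1 \<in> emb ` carr R" using emb_one closed(2) by (metis imageI)
  show "zero R1 \<in> emb ` carr R" using emb_zero closed(1) by (metis imageI)
next
  fix x y assume "x \<in> emb ` carr R" "y \<in> emb ` carr R"
  then obtain a b where ab: "a \<in> carr R" "b \<in> carr R" "x = emb a" "y = emb b" by blast
  show "add R1 x y \<in> emb ` carr R" unfolding ab(3,4) emb_add[OF ab(1,2), symmetric] using ab by simp
  show "mul R1 x y \<in> emb ` carr R" unfolding ab(3,4) emb_mul[OF ab(1,2), symmetric] using ab by simp
next
  fix c x assume "x \<in> emb ` carr R"
  then obtain a where a: "a \<in> carr R" "x = emb a" by blast
  show "smul R1 c x \<in> emb ` carr R" unfolding a(2) emb_smul[OF a(1), symmetric] using a by simp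
qed

lemma bimodule_map_emb_E1: "bimodule_map R1 (emb ` carr R) (emb \<circ> E1)"
  unfolding bimodule_map_def
proof (intro conjI ballI)
  fix m m' assume "m \<in> carr R1" "m' \<in> carr R1"
  then show "(emb \<circ> E1) (add R1 m m') = add R1 ((emb \<circ> E1) m) ((emb \<circ> E1) m')"
    by (simp add: E1_add emb_add)
next
  fix x m assume "x \<in> emb ` carr R" "m \<in> carr R1"
  then obtain a where a: "a \<in> carr R" "x = emb a" by blast
  show "(emb \<circ> E1) (mul R1 x m) = mul R1 x ((emb \<circ> E1) m)"
    unfolding a(2) using a \<open>m \<in> carr R1\<close> by (simp add: E1_emb_left emb_mul)
  show "(emb \<circ> E1) (mul R1 m x) = mul R1 ((emb \<circ> E1) m) x"
    unfolding a(2) using a \<open>m \<in> carr R1\<close> by (simp add: E1_emb_right emb_mul)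
qed simp

lemma strongly_separable_R1: "strongly_separable R1 (emb ` carr R) (emb \<circ> E1) n r1 s1 lam"
  unfolding strongly_separable_def
  using R1_kalgebra subalgebra_emb bimodule_map_emb_E1 R1_dual_basis_expand1 R1_dual_basis_expand2
    R1_sum_r_s lam_nonzero
  by (simp add: dual_term1_def dual_term2_def)

lemma mul_gen_one: "Y \<in> carr R1 \<Longrightarrow> b \<in> carr R \<Longrightarrow> mul R1 Y (gen (one R) b) = gen (contract_E Y) b"
proof -
  assume Y: "Y \<in> carr R1" and b: "b \<in> carr R"
  from Y show ?thesis
  proof (induction rule: R1_induct)
    case zero then show ?case using b by simp
  next
    case (gen a b') then show ?case using b by (simp add: gen_mul contract_E_gen)
  next
    case (add X Y) then show ?case using b by (simp add: R1.distr contract_E_add gen_addl)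
  next
    case (smul c X) then show ?case using b by (simp add: contract_E_smul gen_smull)
  qed
qed

lemma mul_gen_S_one: "Y \<in> carr R1 \<Longrightarrow> x \<in> S \<Longrightarrow> mul R1 Y (gen x (one R)) = gen (mul R (contract_E Y) x) (one R)"
proof -
  assume Y: "Y \<in> carr R1" and x: "x \<in> S"
  have xc: "x \<in> carr R" using x by simp
  from Y show ?thesis
  proof (induction rule: R1_induct)
    case zero then show ?case using xc by simp
  next
    case (gen a b) then show ?case using x xc by (simp add: gen_mul contract_E_gen E_right mul_assoc)
  next
    case (add X Y) then show ?case using xc by (simp add: R1.distr contract_E_add gen_addl distr)
  next
    case (smul c X) then show ?case using xc by (simp add: contract_E_smul gen_smull)
  qed
qed

lemma cent_mul_gen:
  assumes X: "X \<in> cent R1 (emb ` carr R)" and mb: "m \<in> carr R" "b \<in> carr R"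
  shows "mul R1 X (gen m b) = gen (mul R m (contract_E X)) b"
proof -
  have Xc: "X \<in> carr R1" using X by (rule R1.cent_carr)
  have "mul R1 X (gen m b) = mul R1 (mul R1 X (emb m)) (gen (one R) b)"
    using mb Xc by (simp add: mul_emb_gen R1.mul_assoc)
  also have "\<dots> = mul R1 (emb m) (mul R1 X (gen (one R) b))"
    using R1.cent_comm[OF X] mb Xc by (simp add: R1.mul_assoc)
  also have "\<dots> = gen (mul R m (contract_E X)) b" using mb Xc by (simp add: mul_gen_one mul_emb_gen)
  finally show ?thesis .
qed

lemma contract_E_cent:
  assumes X: "X \<in> cent R1 (emb ` carr R)"
  shows "contract_E X \<in> cent R S"
  unfolding cent_def
proof (intro CollectI conjI ballI)
  have Xc: "X \<in> carr R1" using X by (rule R1.cent_carr)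
  then show u: "contract_E X \<in> carr R" by simp
  fix x assume x: "x \<in> S"
  then have "gen (mul R (contract_E X) x) (one R) = gen (mul R x (contract_E X)) (one R)"
    using mul_gen_S_one[OF Xc x] cent_mul_gen[OF X] by simp
  then have "E1 (gen (mul R (contract_E X) x) (one R)) = E1 (gen (mul R x (contract_E X)) (one R))"
    by simp
  then have "smul R lam (mul R (contract_E X) x) = smul R lam (mul R x (contract_E X))"
    using u x by (simp add: E1_gen)
  then have "smul R (inverse lam) (smul R lam (mul R (contract_E X) x)) =
      smul R (inverse lam) (smul R lam (mul R x (contract_E X)))" by simp
  then show "mul R (contract_E X) x = mul R x (contract_E X)"
    using u x lam_nonzero by simp
qed

text \<open>Irreducibility passes from \<open>S \<subseteq> R\<close> to \<open>R \<subseteq> R1\<close>: an element X of the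
  relative commutant acts on generators by \<open>X (m \<otimes> b) = m u \<otimes> b\<close> with u in \<open>C\<^sub>R(S)\<close>,
  so \<open>X = X \<cdot> 1 = \<Sum> r\<^sub>i u \<otimes> s\<^sub>i\<close> is a scalar once u is.\<close>

lemma cent_emb_subset_scalars:
  assumes cS: "cent R S \<subseteq> scalars R"
  shows "cent R1 (emb ` carr R) \<subseteq> scalars R1"
proof
  fix X assume X: "X \<in> cent R1 (emb ` carr R)"
  have Xc: "X \<in> carr R1" using X by (rule R1.cent_carr)
  obtain c where c: "contract_E X = smul R c (one R)"
    using cS contract_E_cent[OF X] unfolding scalars_def by blast
  have "X = mul R1 X (one R1)" using Xc by simp
  also have "\<dots> = fsum R1 (\<lambda>i. mul R1 X (gen (r i) (s i))) {..<n}"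
    unfolding one_R1_gen using Xc by (intro R1.fsum_mul_left[symmetric]) simp_all
  also have "\<dots> = fsum R1 (\<lambda>i. smul R1 c (gen (r i) (s i))) {..<n}"
    by (intro R1.fsum_cong) (simp add: cent_mul_gen[OF X] c gen_smull)
  also have "\<dots> = smul R1 c (one R1)" unfolding one_R1_gen by (intro R1.fsum_smul) simp
  finally show "X \<in> scalars R1" unfolding scalars_def by blast
qed

lemma E1_inj_on_scalars:
  assumes "one R \<noteq> zero R" "X \<in> scalars R1" "Y \<in> scalars R1" "E1 X = E1 Y"
  shows "X = Y"
proof -
  obtain a b where "X = smul R1 a (one R1)" "Y = smul R1 b (one R1)"
    using assms(2,3) unfolding scalars_def by blast
  moreover have "a = b"
    using assms(1,4) calculation by (intro smul_one_inject) (simp_all add: E1_smul)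
  ultimately show ?thesis by simp
qed

lemma emb_cent:
  assumes X: "X \<in> cent R T" and T: "T \<subseteq> carr R"
  shows "emb X \<in> cent R1 (emb ` T)"
  unfolding cent_def
proof (intro CollectI conjI ballI)
  have Xc: "X \<in> carr R" using X by (rule cent_carr)
  then show "emb X \<in> carr R1" by simp
  fix t assume "t \<in> emb ` T"
  then obtain m where m: "m \<in> T" "t = emb m" by blast
  then have "mul R X m = mul R m X" using X by (blast intro: cent_comm)
  then show "mul R1 (emb X) t = mul R1 t (emb X)"
    using m T Xc by (auto simp: emb_mul[symmetric])
qed

lemma E1_cent:
  assumes X: "X \<in> cent R1 (emb ` T)" and T: "T \<subseteq> carr R"
  shows "E1 X \<in> cent R T"
  unfolding cent_def
proof (intro CollectI conjI ballI)
  have Xc: "X \<in> carr R1" using X by (rule R1.cent_carr)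
  then show "E1 X \<in> carr R" by simp
  fix m assume m: "m \<in> T"
  then have mc: "m \<in> carr R" using T by blast
  have "mul R (E1 X) m = E1 (mul R1 X (emb m))" using mc Xc by (simp add: E1_emb_right)
  also have "\<dots> = E1 (mul R1 (emb m) X)" using R1.cent_comm[OF X] m by simp
  also have "\<dots> = mul R m (E1 X)" using mc Xc by (simp add: E1_emb_left)
  finally show "mul R (E1 X) m = mul R m (E1 X)" .
qed

end

section \<open>Nakayama automorphisms in the tower\<close>

text \<open>The test set T is D for \<open>q\<close>, \<open>q\<^sub>A\<close>, \<open>q\<^sub>B\<close>, and all of \<open>M\<^sub>2\<close> for \<open>qt\<close>.\<close>

definition nakayama_on :: "('k, 'b) kalg \<Rightarrow> 'b set \<Rightarrow> 'b set \<Rightarrow> ('b \<Rightarrow> 'c) \<Rightarrow> ('b \<Rightarrow> 'b) \<Rightarrow> bool" where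
  "nakayama_on Z D T phi q \<longleftrightarrow>
     (\<forall>d\<in>D. q d \<in> D) \<and> (\<forall>d\<in>D. \<forall>t\<in>T. phi (mul Z (q d) t) = phi (mul Z t d))"

lemma nakayama_onD:
  assumes "nakayama_on Z D T phi q" "d \<in> D"
  shows nakayama_on_closed: "q d \<in> D"
    and nakayama_on_twist: "t \<in> T \<Longrightarrow> phi (mul Z (q d) t) = phi (mul Z t d)"
  using assms unfolding nakayama_on_def by blast+

lemma nakayama_onI:
  "\<forall>d\<in>D. q d \<in> D \<Longrightarrow> \<forall>d\<in>D. \<forall>t\<in>T. phi (mul Z (q d) t) = phi (mul Z t d) \<Longrightarrow>
   nakayama_on Z D T phi q"
  unfolding nakayama_on_def by (rule conjI)

locale tower = basic_construction

text \<open>The basic construction applied to \<open>R \<subseteq> R1\<close>: \<open>M1.R1\<close>, \<open>M1.emb\<close> and \<open>M1.E1\<close>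
  are \<open>M\<^sub>2\<close>, \<open>i\<^sub>2\<close> and \<open>E\<^sub>M\<^sub>1\<close>.\<close>

sublocale tower \<subseteq> M1: basic_construction R1 "emb ` carr R" "emb \<circ> E1" n r1 s1 lam
  by (rule basic_construction.intro, rule strongly_separable_R1)

context tower
begin

abbreviation "A \<equiv> cent R1 (emb ` S)"
abbreviation "B \<equiv> cent M1.R1 (M1.emb ` emb ` carr R)"
abbreviation "C \<equiv> cent M1.R1 (M1.emb ` emb ` S)"
abbreviation "F \<equiv> E1 \<circ> M1.E1"

lemma B_subset_C: "B \<subseteq> C"
  by (rule M1.R1.cent_antimono) auto

lemma emb_A_in_C: "a \<in> A \<Longrightarrow> M1.emb a \<in> C"
  by (rule M1.emb_cent) auto

lemma E1_C_in_A: "c \<in> C \<Longrightarrow> M1.E1 c \<in> A"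
  by (rule M1.E1_cent) auto

lemma E1_B_in_scalars: "cent R S \<subseteq> scalars R \<Longrightarrow> b \<in> B \<Longrightarrow> M1.E1 b \<in> scalars R1"
  using M1.E1_cent[of b "emb ` carr R"] cent_emb_subset_scalars by auto

lemma F_faithful_eqI:
  assumes "faithful_on M1.R1 C R F" "u \<in> C" "v \<in> C"
    "\<And>c. c \<in> C \<Longrightarrow> F (mul M1.R1 u c) = F (mul M1.R1 v c)"
  shows "u = v"
  by (rule M1.R1.cent_faithful_eqI[OF k_algebra_axioms assms(1) _ _ _ _ assms(2-4)])
     (auto simp: M1.E1_add M1.E1_smul E1_add E1_smul)

lemma nakayama_tilde_eq:
  assumes faithF: "faithful_on M1.R1 C R F" and q: "nakayama_on M1.R1 C C F q"
    and qt: "nakayama_on M1.R1 B (carr M1.R1) F qt" and b: "b \<in> B"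
  shows "qt b = q b"
proof (rule F_faithful_eqI[OF faithF])
  have bC: "b \<in> C" using b B_subset_C by blast
  show "qt b \<in> C" using nakayama_on_closed[OF qt b] B_subset_C by blast
  show "q b \<in> C" using q bC by (rule nakayama_on_closed)
  fix c assume c: "c \<in> C"
  have "F (mul M1.R1 (qt b) c) = F (mul M1.R1 c b)"
    using c by (intro nakayama_on_twist[OF qt b] M1.R1.cent_carr)
  also have "\<dots> = F (mul M1.R1 (q b) c)" using nakayama_on_twist[OF q bC c] by simp
  finally show "F (mul M1.R1 (qt b) c) = F (mul M1.R1 (q b) c)" .
qed

lemma nakayama_B_eq_tilde:
  assumes cS: "cent R S \<subseteq> scalars R" and nz: "one R \<noteq> zero R"
    and faithB: "faithful_on M1.R1 B R1 M1.E1" and qB: "nakayama_on M1.R1 B B M1.E1 qB"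
    and qt: "nakayama_on M1.R1 B (carr M1.R1) F qt" and b: "b \<in> B"
  shows "qB b = qt b"
proof (rule M1.R1.cent_faithful_eqI[OF R1.k_algebra_axioms faithB _ M1.E1_closed M1.E1_add M1.E1_smul])
  show "qB b \<in> B" using qB b by (rule nakayama_on_closed)
  show qtb: "qt b \<in> B" using qt b by (rule nakayama_on_closed)
  fix b' assume b': "b' \<in> B"
  have "F (mul M1.R1 (qt b) b') = F (mul M1.R1 b' b)"
    using b' by (intro nakayama_on_twist[OF qt b] M1.R1.cent_carr)
  \<comment> \<open>both sides of the twisted identity for qt lie in k1, on which E1 is injective\<close>
  moreover have "M1.E1 (mul M1.R1 (qt b) b') \<in> scalars R1" "M1.E1 (mul M1.R1 b' b) \<in> scalars R1"
    using qtb b b' by (auto intro: E1_B_in_scalars[OF cS] M1.R1.cent_mul)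
  ultimately have "M1.E1 (mul M1.R1 (qt b) b') = M1.E1 (mul M1.R1 b' b)"
    by (intro E1_inj_on_scalars[OF nz]) simp_all
  then show "M1.E1 (mul M1.R1 (qB b) b') = M1.E1 (mul M1.R1 (qt b) b')"
    using nakayama_on_twist[OF qB b b'] by simp
qed auto

lemma nakayama_emb:
  assumes faithF: "faithful_on M1.R1 C R F" and q: "nakayama_on M1.R1 C C F q"
    and qA: "nakayama_on R1 A A E1 qA" and a: "a \<in> A"
  shows "M1.emb (qA a) = q (M1.emb a)"
proof (rule F_faithful_eqI[OF faithF])
  have qa: "qA a \<in> A" using qA a by (rule nakayama_on_closed)
  then show "M1.emb (qA a) \<in> C" by (rule emb_A_in_C)
  show "q (M1.emb a) \<in> C" using q emb_A_in_C[OF a] by (rule nakayama_on_closed)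
  fix c assume c: "c \<in> C"
  have cc: "c \<in> carr M1.R1" using c by (rule M1.R1.cent_carr)
  have "F (mul M1.R1 (M1.emb (qA a)) c) = E1 (mul R1 (qA a) (M1.E1 c))"
    using qa cc by (simp add: M1.E1_emb_left R1.cent_carr)
  also have "\<dots> = E1 (mul R1 (M1.E1 c) a)" using qA a E1_C_in_A[OF c] by (rule nakayama_on_twist)
  also have "\<dots> = F (mul M1.R1 c (M1.emb a))" using a cc by (simp add: M1.E1_emb_right R1.cent_carr)
  also have "\<dots> = F (mul M1.R1 (q (M1.emb a)) c)"
    using nakayama_on_twist[OF q emb_A_in_C[OF a] c] by simp
  finally show "F (mul M1.R1 (M1.emb (qA a)) c) = F (mul M1.R1 (q (M1.emb a)) c)" .
qed

lemma nakayama_E1: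
  assumes faithA: "faithful_on R1 A R E1" and q: "nakayama_on M1.R1 C C F q"
    and qA: "nakayama_on R1 A A E1 qA" and c: "c \<in> C"
  shows "M1.E1 (q c) = qA (M1.E1 c)"
proof (rule R1.cent_faithful_eqI[OF k_algebra_axioms faithA _ E1_closed E1_add E1_smul])
  have qc: "q c \<in> C" using q c by (rule nakayama_on_closed)
  then show "M1.E1 (q c) \<in> A" by (rule E1_C_in_A)
  show "qA (M1.E1 c) \<in> A" using qA E1_C_in_A[OF c] by (rule nakayama_on_closed)
  fix a assume a: "a \<in> A"
  have ac: "a \<in> carr R1" using a by (rule R1.cent_carr)
  have "E1 (mul R1 (M1.E1 (q c)) a) = F (mul M1.R1 (q c) (M1.emb a))"
    using qc ac by (simp add: M1.E1_emb_right M1.R1.cent_carr)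
  also have "\<dots> = F (mul M1.R1 (M1.emb a) c)" using q c emb_A_in_C[OF a] by (rule nakayama_on_twist)
  also have "\<dots> = E1 (mul R1 a (M1.E1 c))" using c ac by (simp add: M1.E1_emb_left M1.R1.cent_carr)
  also have "\<dots> = E1 (mul R1 (qA (M1.E1 c)) a)"
    using nakayama_on_twist[OF qA E1_C_in_A[OF c] a] by simp
  finally show "E1 (mul R1 (M1.E1 (q c)) a) = E1 (mul R1 (qA (M1.E1 c)) a)" .
qed auto

end

theorem proposition3p9:
  fixes M :: "('k::field, 'a) kalg" and N :: "'a set" and E :: "'a \<Rightarrow> 'a"
    and n :: nat and x y :: "nat \<Rightarrow> 'a" and lam :: 'k
    and q :: "('k, ('k, 'a) free2 set) free2 set \<Rightarrow> ('k, ('k, 'a) free2 set) free2 set"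
    and qB qt :: "('k, ('k, 'a) free2 set) free2 set \<Rightarrow> ('k, ('k, 'a) free2 set) free2 set"
    and qA :: "('k, 'a) free2 set \<Rightarrow> ('k, 'a) free2 set"
  defines "M1 \<equiv> M1_of M N E n x y"
    and "i1 \<equiv> i1_of M N n x y"
    and "EM \<equiv> EM_of M lam"
    and "M2 \<equiv> M2_of M N E n x y lam"
    and "i2 \<equiv> i2_of M N E n x y lam"
    and "EM1 \<equiv> EM1_of M N E n x y lam"
    and "A \<equiv> cent (M1_of M N E n x y) (i1_of M N n x y ` N)"
    and "B \<equiv> cent (M2_of M N E n x y lam) (i2_of M N E n x y lam ` i1_of M N n x y ` carr M)"
    and "C \<equiv> cent (M2_of M N E n x y lam) (i2_of M N E n x y lam ` i1_of M N n x y ` N)"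
    and "F \<equiv> EM_of M lam \<circ> EM1_of M N E n x y lam"
  assumes hyp: "ss_irreducible M N E n x y lam"
    and depth2_M1: "free_right_basis_in M1 M i1 A"
    and depth2_M2: "free_right_basis_in M2 M1 i2 B"
    and faithF: "faithful_on M2 C M F"
    and faithA: "faithful_on M1 A M EM"
    and faithB: "faithful_on M2 B M1 EM1"
    and q_def: "\<forall>c\<in>C. q c \<in> C" "\<forall>c\<in>C. \<forall>c'\<in>C. F (mul M2 (q c) c') = F (mul M2 c' c)"
    and qA_def: "\<forall>a\<in>A. qA a \<in> A" "\<forall>a\<in>A. \<forall>a'\<in>A. EM (mul M1 (qA a) a') = EM (mul M1 a' a)"
    and qB_def: "\<forall>b\<in>B. qB b \<in> B" "\<forall>b\<in>B. \<forall>b'\<in>B. EM1 (mul M2 (qB b) b') = EM1 (mul M2 b' b)"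
    and qt_def: "\<forall>b\<in>B. qt b \<in> B" "\<forall>b\<in>B. \<forall>z\<in>carr M2. F (mul M2 (qt b) z) = F (mul M2 z b)"
  shows "(\<forall>b\<in>B. qB b = q b \<and> qt b = q b) \<and>
         (\<forall>a\<in>A. i2 (qA a) = q (i2 a)) \<and>
         (\<forall>c\<in>C. EM1 (q c) = qA (EM1 c))"
proof -
  interpret L: tower M N E n x y lam
    using hyp unfolding ss_irreducible_def by unfold_locales (simp add: strongly_separable_def)
  have cS: "cent M N \<subseteq> scalars M" and nz: "one M \<noteq> zero M"
    using hyp unfolding ss_irreducible_def by simp_all
  note defs = M1_def i1_def EM_def M2_def i2_def EM1_def A_def B_def C_def F_def
    M1_of_def i1_of_def EM_of_def M2_of_def i2_of_def EM1_of_def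
  note nakayama = nakayama_onI[OF q_def, unfolded defs] nakayama_onI[OF qA_def, unfolded defs]
    nakayama_onI[OF qB_def, unfolded defs] nakayama_onI[OF qt_def, unfolded defs]
  note faithful = faithF[unfolded defs] faithA[unfolded defs] faithB[unfolded defs]
  have "qt b = q b" if "b \<in> B" for b
    using that unfolding defs by (rule L.nakayama_tilde_eq[OF faithful(1) nakayama(1,4)])
  moreover have "qB b = qt b" if "b \<in> B" for b
    using that unfolding defs by (rule L.nakayama_B_eq_tilde[OF cS nz faithful(3) nakayama(3,4)])
  moreover have "i2 (qA a) = q (i2 a)" if "a \<in> A" for a
    using that unfolding defs by (rule L.nakayama_emb[OF faithful(1) nakayama(1,2)])
  moreover have "EM1 (q c) = qA (EM1 c)" if "c \<in> C" for c
    using that unfolding defs by (rule L.nakayama_E1[OF faithful(2) nakayama(1,2)])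
  ultimately show ?thesis by simp
qed

end
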